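(* Let $(\Omega,\mu)$ be a finite probability space, $r,\gamma>0$, $q\ge2$, and let $f\colon\Omega^n\to\mathbb{R}$ be $(r,\gamma)$-$L_2$-global. If either (1) $0<\rho\le\frac{1}{3\sqrt2}\min\left(\frac{1}{r^{(q-2)/q}q},\frac{1}{\sqrt q}\right)$, or (2) $r\ge1$ and $0<\rho\le\frac{\log q}{16rq}$, then $\|T_\rho f\|_q^q\le\|f\|_2^2\gamma^{q-2}$.
   Context: Norms w.r.t. $\mu^n$; $\log$ natural. $T_\rho f(x)=\mathbb{E}_y f(y)$ where $y$ keeps each $x_i$ independently with probability $\rho$ and otherwise resamples it from $\mu$. For $i\in[n]$, $E_i$ averages over coordinate $i$ according to $\mu$, $L_i=I-E_i$, $L_S=\prod_{i\in S}L_i$, $D_{S,x}f=(L_Sf)_{S\to x}$ with $h_{S\to x}(y)=h(x,y)$. $f$ is $(r,\gamma)$-$L_2$-global if $\|D_{S,x}f\|_2\le r^{|S|}\gamma$ for all $S\subseteq[n]$ and $x\in\Omega^S$. *)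

theory Defs
  imports "HOL-Analysis.Analysis"
begin

text \<open>The finite probability space (Omega, mu): Omega is a finite type 'a, mu a weight function.
Points of Omega^I are extensional functions in PiE I (\<lambda>_. UNIV); Omega^n uses I = {..<n}.\<close>

definition fin_prob :: "('a::finite \<Rightarrow> real) \<Rightarrow> bool" where
  "fin_prob \<mu> \<longleftrightarrow> (\<forall>a. 0 \<le> \<mu> a) \<and> (\<Sum>a\<in>UNIV. \<mu> a) = 1"

definition expect_on :: "('a::finite \<Rightarrow> real) \<Rightarrow> nat set \<Rightarrow> ((nat \<Rightarrow> 'a) \<Rightarrow> real) \<Rightarrow> real" where
  "expect_on \<mu> I g = (\<Sum>y\<in>PiE I (\<lambda>_. UNIV). (\<Prod>i\<in>I. \<mu> (y i)) * g y)"

definition normq_pow :: "('a::finite \<Rightarrow> real) \<Rightarrow> nat \<Rightarrow> real \<Rightarrow> ((nat \<Rightarrow> 'a) \<Rightarrow> real) \<Rightarrow> real" where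
  "normq_pow \<mu> n q f = expect_on \<mu> {..<n} (\<lambda>x. \<bar>f x\<bar> powr q)"

definition norm2_on :: "('a::finite \<Rightarrow> real) \<Rightarrow> nat set \<Rightarrow> ((nat \<Rightarrow> 'a) \<Rightarrow> real) \<Rightarrow> real" where
  "norm2_on \<mu> I g = sqrt (expect_on \<mu> I (\<lambda>y. (g y)\<^sup>2))"

text \<open>Noise operator: y keeps x_i with probability rho, otherwise resamples from mu.\<close>
definition T_op :: "('a::finite \<Rightarrow> real) \<Rightarrow> nat \<Rightarrow> real \<Rightarrow> ((nat \<Rightarrow> 'a) \<Rightarrow> real) \<Rightarrow> (nat \<Rightarrow> 'a) \<Rightarrow> real" where
  "T_op \<mu> n \<rho> f x = (\<Sum>y\<in>PiE {..<n} (\<lambda>_. UNIV).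
      (\<Prod>i<n. \<rho> * (if y i = x i then 1 else 0) + (1 - \<rho>) * \<mu> (y i)) * f y)"

definition E_op :: "('a::finite \<Rightarrow> real) \<Rightarrow> nat \<Rightarrow> ((nat \<Rightarrow> 'a) \<Rightarrow> real) \<Rightarrow> (nat \<Rightarrow> 'a) \<Rightarrow> real" where
  "E_op \<mu> i f x = (\<Sum>a\<in>UNIV. \<mu> a * f (x(i := a)))"

definition L_op :: "('a::finite \<Rightarrow> real) \<Rightarrow> nat \<Rightarrow> ((nat \<Rightarrow> 'a) \<Rightarrow> real) \<Rightarrow> (nat \<Rightarrow> 'a) \<Rightarrow> real" where
  "L_op \<mu> i f x = f x - E_op \<mu> i f x"

definition LS_op :: "('a::finite \<Rightarrow> real) \<Rightarrow> nat set \<Rightarrow> ((nat \<Rightarrow> 'a) \<Rightarrow> real) \<Rightarrow> (nat \<Rightarrow> 'a) \<Rightarrow> real" where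
  "LS_op \<mu> S f = foldr (L_op \<mu>) (sorted_list_of_set S) f"

definition D_op :: "('a::finite \<Rightarrow> real) \<Rightarrow> nat set \<Rightarrow> (nat \<Rightarrow> 'a) \<Rightarrow> ((nat \<Rightarrow> 'a) \<Rightarrow> real) \<Rightarrow> (nat \<Rightarrow> 'a) \<Rightarrow> real" where
  "D_op \<mu> S x f y = LS_op \<mu> S f (\<lambda>i. if i \<in> S then x i else y i)"

definition L2_global :: "('a::finite \<Rightarrow> real) \<Rightarrow> nat \<Rightarrow> real \<Rightarrow> real \<Rightarrow> ((nat \<Rightarrow> 'a) \<Rightarrow> real) \<Rightarrow> bool" where
  "L2_global \<mu> n r \<gamma> f \<longleftrightarrow>
     (\<forall>S \<subseteq> {..<n}. \<forall>x\<in>PiE S (\<lambda>_. UNIV).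
        norm2_on \<mu> ({..<n} - S) (D_op \<mu> S x f) \<le> r ^ card S * \<gamma>)"

end

theory Submission
  imports Defs
begin

text \<open>Resample the coordinates one at a time. For a single coordinate, write the squared
  \<open>T\<^sub>\<sigma>\<close>-norm over the coordinates not yet treated as \<open>s + 2\<rho> c + \<rho>\<^sup>2 t\<close>, where \<open>s\<close> comes from the
  part not depending on the coordinate, \<open>t\<close> from its derivative and \<open>c\<close> is a mean-zero correlation
  with \<open>c\<^sup>2 \<le> s t\<close>. A second-order estimate of \<open>x \<mapsto> x\<^sup>q\<^sup>/\<^sup>2\<close> gives
  \<open>E (s + 2\<rho> c + \<rho>\<^sup>2 t)\<^sup>q\<^sup>/\<^sup>2 \<le> (s + \<sigma>\<^sup>2 E t)\<^sup>q\<^sup>/\<^sup>2 + \<beta> E t\<^sup>q\<^sup>/\<^sup>2\<close>, so that by induction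
  \<open>\<parallel>T\<^sub>\<rho> f\<parallel>\<^sub>q\<^sup>q \<le> \<Sum>\<^sub>S \<beta>\<^bsup>|S|\<^esup> E\<^sub>x \<parallel>T\<^sub>\<sigma> D\<^sub>S\<^sub>,\<^sub>x f\<parallel>\<^sub>2\<^sup>q\<close>. Globality bounds the inner norms by
  \<open>r\<^bsup>|S|\<^esup>\<gamma>\<close>, which turns the right-hand side into
  \<open>\<gamma>\<^bsup>q-2\<^esup> \<Sum>\<^sub>S (\<beta> r\<^bsup>q-2\<^esup>)\<^bsup>|S|\<^esup> \<parallel>T\<^sub>\<sigma> L\<^sub>S f\<parallel>\<^sub>2\<^sup>2\<close>, and by orthogonality of the
  \<open>E\<^sub>i\<close>/\<open>L\<^sub>i\<close> decomposition this is at most \<open>\<gamma>\<^bsup>q-2\<^esup> \<parallel>f\<parallel>\<^sub>2\<^sup>2\<close> as soon as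
  \<open>\<sigma>\<^sup>2 + \<beta> r\<^bsup>q-2\<^esup> \<le> 1\<close>. Both hypotheses on \<open>\<rho>\<close> guarantee this for a suitable choice of the
  cut-off \<open>w\<^sub>0\<close> separating small and large perturbations in the second-order estimate.\<close>

section \<open>Scalar inequalities\<close>

lemma powr_taylor2:
  fixes x p :: real
  assumes x0: "x > 0" and x1: "x \<noteq> 1"
  obtains \<xi> where "min x 1 < \<xi>" "\<xi> < max x 1"
    "x powr p = 1 + p * (x - 1) + p * (p - 1) / 2 * \<xi> powr (p - 2) * (x - 1)\<^sup>2"
proof -
  define D :: "nat \<Rightarrow> real \<Rightarrow> real" where
    "D m t = (if m = 0 then t powr p
      else if m = 1 then p * t powr (p - 1) else p * (p - 1) * t powr (p - 2))" for m t
  have D0: "D 0 = (\<lambda>t. t powr p)"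
    by (simp add: D_def fun_eq_iff)
  have D_deriv: "\<forall>m t. m < 2 \<and> min x 1 \<le> t \<and> t \<le> max x 1
      \<longrightarrow> DERIV (D m) t :> D (Suc m) t"
  proof (intro allI impI)
    fix m :: nat and t :: real
    assume mt: "m < 2 \<and> min x 1 \<le> t \<and> t \<le> max x 1"
    have t0: "t > 0"
      using mt x0 by (auto simp: min_def split: if_splits)
    have "DERIV (\<lambda>t. p * t powr (p - 1)) t :> p * ((p - 1) * t powr (p - 1 - 1))"
      by (intro DERIV_cmult has_real_derivative_powr t0)
    moreover have "D 1 = (\<lambda>t. p * t powr (p - 1))"
      by (simp add: D_def fun_eq_iff)
    ultimately show "DERIV (D m) t :> D (Suc m) t"
      using mt has_real_derivative_powr[OF t0, of p] D0
      by (cases m) (auto simp: D_def mult.assoc diff_diff_eq less_Suc_eq)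
  qed
  have "\<exists>t. (if x < 1 then x < t \<and> t < 1 else 1 < t \<and> t < x) \<and>
      x powr p = (\<Sum>m<2. D m 1 / fact m * (x - 1) ^ m) + D 2 t / fact 2 * (x - 1) ^ 2"
    by (rule Taylor[where a = "min x 1" and b = "max x 1", OF _ D0 D_deriv]) (use x1 in auto)
  then obtain t where t: "if x < 1 then x < t \<and> t < 1 else 1 < t \<and> t < x"
    and e: "x powr p = (\<Sum>m<2. D m 1 / fact m * (x - 1) ^ m) + D 2 t / fact 2 * (x - 1) ^ 2"
    by blast
  have "x powr p = 1 + p * (x - 1) + p * (p - 1) / 2 * t powr (p - 2) * (x - 1)\<^sup>2"
    using e by (simp add: D_def numeral_2_eq_2)
  moreover have "min x 1 < t" "t < max x 1"
    using t by (auto split: if_splits)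
  ultimately show thesis
    using that by blast
qed

lemma powr_tangent_le:
  fixes p s v :: real
  assumes p1: "p \<ge> 1" and s0: "s \<ge> 0" and v0: "v \<ge> 0"
  shows "s powr p + p * s powr (p - 1) * v \<le> (s + v) powr p"
proof (cases "s = 0 \<or> v = 0")
  case True
  then show ?thesis using p1 by auto
next
  case False
  then have sp: "s > 0" and vp: "v > 0" using s0 v0 by auto
  define x where "x = 1 + v / s"
  have x0: "x > 0" and x1: "x \<noteq> 1"
    unfolding x_def using sp vp by (auto simp: field_simps)
  obtain \<xi> where "x powr p
      = 1 + p * (x - 1) + p * (p - 1) / 2 * \<xi> powr (p - 2) * (x - 1)\<^sup>2"
    using powr_taylor2[OF x0 x1] by blast
  moreover have "p * (p - 1) / 2 * \<xi> powr (p - 2) * (x - 1)\<^sup>2 \<ge> 0"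
    using p1 by simp
  ultimately have ge: "1 + p * (v / s) \<le> x powr p"
    unfolding x_def by simp
  have "s powr p + p * s powr (p - 1) * v = s powr p * (1 + p * (v / s))"
    using sp powr_mult_base[of s "p - 1"] by (simp add: field_simps)
  also have "\<dots> \<le> s powr p * x powr p"
    using ge by (intro mult_left_mono) auto
  also have "\<dots> = (s * x) powr p"
    by (simp add: powr_mult)
  also have "s * x = s + v"
    unfolding x_def using sp by (simp add: field_simps)
  finally show ?thesis .
qed

lemma powr_bregman_le_concave:
  fixes p u :: real
  assumes "1 \<le> p" "p \<le> 2" "u \<ge> -1"
  shows "(1 + u) powr p - 1 - p * u \<le> (p - 1) * u\<^sup>2"
proof (cases "u = -1")
  case True
  then show ?thesis using assms by simp
next
  case False
  then have y0: "1 + u > 0" using assms by simp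
  have "(1 + u) powr (p - 1) * 1 powr (2 - p) \<le> (p - 1) * (1 + u) + (2 - p) * 1"
    using assms y0 by (intro Youngs_inequality_0) auto
  then have "(1 + u) powr (p - 1) \<le> 1 + (p - 1) * u"
    by (simp add: algebra_simps)
  then have "(1 + u) * (1 + u) powr (p - 1) \<le> (1 + u) * (1 + (p - 1) * u)"
    using y0 by (intro mult_left_mono) auto
  then show ?thesis
    using powr_mult_base[of "1 + u" "p - 1"] y0 by (simp add: algebra_simps power2_eq_square)
qed

lemma powr_bregman_le:
  fixes p u \<delta> :: real
  assumes p1: "p \<ge> 1" and u1: "u \<ge> -1" and ud: "u \<le> \<delta>" and d0: "\<delta> \<ge> 0"
  shows "(1 + u) powr p - 1 - p * u
      \<le> p * (p - 1) * max 1 ((1 + \<delta>) powr (p - 2)) * u\<^sup>2"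
proof -
  define F where "F = max 1 ((1 + \<delta>) powr (p - 2))"
  have F1: "F \<ge> 1" unfolding F_def by simp
  have pF: "(p - 1) * 1 \<le> (p - 1) * (p * F)"
    using p1 F1 mult_mono[of 1 p 1 F] by (intro mult_left_mono) auto
  consider "u = 0" | "u < 0" "p < 2" | "u = -1" | "u > -1" "u \<noteq> 0" "u > 0 \<or> p \<ge> 2"
    using u1 by linarith
  then have "(1 + u) powr p - 1 - p * u \<le> p * (p - 1) * F * u\<^sup>2"
  proof cases
    case 1
    then show ?thesis by simp
  next
    case 2
    have "(1 + u) powr p - 1 - p * u \<le> (p - 1) * u\<^sup>2"
      using 2 p1 u1 by (intro powr_bregman_le_concave) auto
    also have "\<dots> \<le> p * (p - 1) * F * u\<^sup>2"
      using pF by (intro mult_right_mono) (auto simp: ac_simps)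
    finally show ?thesis .
  next
    case 3
    then show ?thesis using pF by (simp add: ac_simps)
  next
    case 4
    have y0: "1 + u > 0" and y1: "1 + u \<noteq> 1"
      using 4 by auto
    obtain \<xi> where xi: "min (1 + u) 1 < \<xi>" "\<xi> < max (1 + u) 1"
      and e: "(1 + u) powr p = 1 + p * u + p * (p - 1) / 2 * \<xi> powr (p - 2) * u\<^sup>2"
      using powr_taylor2[OF y0 y1, of p] by auto
    have xi0: "\<xi> > 0"
      using xi y0 by (auto simp: min_def split: if_splits)
    have "\<xi> powr (p - 2) \<le> F"
    proof (cases "p \<ge> 2")
      case True
      have "\<xi> \<le> 1 + \<delta>"
        using xi ud d0 by (auto simp: max_def split: if_splits)
      then show ?thesis
        unfolding F_def using True xi0 by (simp add: le_max_iff_disj powr_mono2)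
    next
      case False
      then have "\<xi> \<ge> 1"
        using 4 xi by (auto simp: min_def)
      then have "\<xi> powr (p - 2) \<le> \<xi> powr 0"
        using False by (intro powr_mono) auto
      then show ?thesis using F1 xi0 by simp
    qed
    then have "(1 + u) powr p - 1 - p * u \<le> p * (p - 1) / 2 * F * u\<^sup>2"
      using e p1 by (simp add: mult_right_mono mult_left_mono)
    also have "\<dots> \<le> p * (p - 1) * F * u\<^sup>2"
      using p1 F1 by simp
    finally show ?thesis .
  qed
  then show ?thesis unfolding F_def .
qed

definition quad_coeff :: "real \<Rightarrow> real \<Rightarrow> real" where
  "quad_coeff p w0 = p * (p - 1) * max 1 ((1 + (2 * w0 + w0\<^sup>2)) powr (p - 2))
      * (2 + w0)\<^sup>2"

definition tail_coeff :: "real \<Rightarrow> real \<Rightarrow> real" where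
  "tail_coeff p w0 = ((1 + w0) powr (2 * p) + (p - 1)) / w0 powr (2 * p)"

lemma quad_coeff_nonneg: "p \<ge> 1 \<Longrightarrow> quad_coeff p w0 \<ge> 0"
  by (simp add: quad_coeff_def)

lemma tail_coeff_ge_1:
  assumes "p \<ge> 1" "w0 > 0"
  shows "tail_coeff p w0 \<ge> 1"
proof -
  have "w0 powr (2 * p) \<le> (1 + w0) powr (2 * p) + (p - 1)"
    using assms powr_mono2[of "2 * p" w0 "1 + w0"] by simp
  then show ?thesis
    unfolding tail_coeff_def using assms by simp
qed

lemma sq_powr: "(a\<^sup>2) powr p = \<bar>a::real\<bar> powr (2 * p)"
  by (simp add: powr_powr[symmetric] powr_realpow[symmetric, of "\<bar>a\<bar>" 2] abs_le_zero_iff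
        zero_less_abs_iff split: if_splits)

lemma powr_le_mult_powr:
  fixes N M p :: real
  assumes "0 \<le> N" "N \<le> M" "p \<ge> 1"
  shows "N powr p \<le> N * M powr (p - 1)"
proof -
  have "N powr p = N * N powr (p - 1)"
    using powr_mult_base[of N "p - 1"] assms by simp
  also have "\<dots> \<le> N * M powr (p - 1)"
    using assms by (intro mult_left_mono powr_mono2) auto
  finally show ?thesis .
qed


lemma powr_global_bound:
  fixes r \<gamma> q :: real
  assumes "r > 0" "\<gamma> > 0"
  shows "((r ^ k * \<gamma>)\<^sup>2) powr (q/2 - 1) = (r powr (q - 2)) ^ k * \<gamma> powr (q - 2)"
proof -
  have pos: "r ^ k * \<gamma> > 0"
    using assms by simp
  have "((r ^ k * \<gamma>)\<^sup>2) powr (q/2 - 1) = ((r ^ k * \<gamma>) powr 2) powr (q/2 - 1)"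
    using powr_realpow[OF pos, of 2] by simp
  also have "\<dots> = (r ^ k * \<gamma>) powr (q - 2)"
    by (simp add: powr_powr algebra_simps)
  also have "\<dots> = (r ^ k) powr (q - 2) * \<gamma> powr (q - 2)"
    by (rule powr_mult)
  also have "(r ^ k) powr (q - 2) = (r powr (q - 2)) ^ k"
    using assms by (induction k) (simp_all add: powr_mult)
  finally show ?thesis .
qed


lemma powr_bregman_le_quad:
  fixes p u w w0 :: real
  assumes p1: "p \<ge> 1" and u1: "u \<ge> -1" and w: "0 \<le> w" "w \<le> w0"
    and uw: "\<bar>u\<bar> \<le> 2 * w + w\<^sup>2"
  shows "(1 + u) powr p - 1 - p * u \<le> quad_coeff p w0 * w\<^sup>2"
proof -
  define F where "F = max 1 ((1 + (2 * w0 + w0\<^sup>2)) powr (p - 2))"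
  have "2 * w + w\<^sup>2 \<le> 2 * w0 + w0\<^sup>2"
    using w by (intro add_mono power_mono) auto
  then have "(1 + u) powr p - 1 - p * u \<le> p * (p - 1) * F * u\<^sup>2"
    unfolding F_def using uw w by (intro powr_bregman_le p1 u1) auto
  also have "u\<^sup>2 \<le> w\<^sup>2 * (2 + w0)\<^sup>2"
  proof -
    have "u\<^sup>2 \<le> (2 * w + w\<^sup>2)\<^sup>2"
      using uw w by (metis abs_le_square_iff abs_of_nonneg add_nonneg_nonneg mult_nonneg_nonneg
          zero_le_power2 zero_le_numeral)
    also have "\<dots> = w\<^sup>2 * (2 + w)\<^sup>2"
      by (simp add: power2_eq_square algebra_simps)
    also have "\<dots> \<le> w\<^sup>2 * (2 + w0)\<^sup>2"
      using w by (intro mult_left_mono power_mono) auto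
    finally show ?thesis .
  qed
  then have "p * (p - 1) * F * u\<^sup>2 \<le> p * (p - 1) * F * (w\<^sup>2 * (2 + w0)\<^sup>2)"
    using p1 by (intro mult_left_mono) (auto simp: F_def)
  finally show ?thesis
    by (simp add: quad_coeff_def F_def ac_simps)
qed

lemma powr_bregman_le_tail:
  fixes p u w w0 :: real
  assumes p1: "p \<ge> 1" and u1: "u \<ge> -1" and w: "0 < w0" "w0 < w"
    and uw: "\<bar>u\<bar> \<le> 2 * w + w\<^sup>2"
  shows "(1 + u) powr p - 1 - p * u \<le> tail_coeff p w0 * w powr (2 * p)"
proof -
  have "(1 + u) powr p - 1 - p * u \<le> (1 + u) powr p + (p - 1)"
    using u1 p1 mult_left_mono[of "-u" 1 p] by simp
  also have "(1 + u) powr p \<le> ((1 + w)\<^sup>2) powr p"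
    using uw u1 p1 by (intro powr_mono2) (auto simp: power2_eq_square algebra_simps)
  also have "((1 + w)\<^sup>2) powr p = (1 + w) powr (2 * p)"
    using w by (simp add: sq_powr)
  also have "\<dots> \<le> ((1 + w0) / w0 * w) powr (2 * p)"
    using w p1 by (intro powr_mono2) (auto simp: field_simps)
  also have "\<dots> = (1 + w0) powr (2 * p) / w0 powr (2 * p) * w powr (2 * p)"
    by (simp add: powr_mult powr_divide)
  also have "p - 1 \<le> (p - 1) / w0 powr (2 * p) * w powr (2 * p)"
  proof -
    have "w0 powr (2 * p) \<le> w powr (2 * p)"
      using w p1 by (intro powr_mono2) auto
    then have "(p - 1) * 1 \<le> (p - 1) * (w powr (2 * p) / w0 powr (2 * p))"
      using p1 w by (intro mult_left_mono) auto
    then show ?thesis by simp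
  qed
  finally show ?thesis
    by (simp add: tail_coeff_def add_divide_distrib distrib_right)
qed

lemma powr_bregman_le_quad_tail:
  fixes p u w w0 :: real
  assumes "p \<ge> 1" "u \<ge> -1" "0 < w0" "0 \<le> w" "\<bar>u\<bar> \<le> 2 * w + w\<^sup>2"
  shows "(1 + u) powr p - 1 - p * u
      \<le> quad_coeff p w0 * w\<^sup>2 + tail_coeff p w0 * w powr (2 * p)"
proof -
  have "quad_coeff p w0 * w\<^sup>2 \<ge> 0"
    using quad_coeff_nonneg[OF assms(1)] by simp
  moreover have "tail_coeff p w0 * w powr (2 * p) \<ge> 0"
    using tail_coeff_ge_1[OF assms(1,3)] by simp
  moreover consider "w \<le> w0" | "w0 < w"
    by linarith
  ultimately show ?thesis
    using powr_bregman_le_quad[of p u w w0] powr_bregman_le_tail[of p u w0 w] assms by fastforce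
qed

lemma perturb_ratio_bounds:
  fixes \<rho> s t c :: real
  assumes sp: "s > 0" and t0: "t \<ge> 0" and cs: "c\<^sup>2 \<le> s * t" and r0: "\<rho> \<ge> 0"
  defines "w \<equiv> \<rho> * sqrt t / sqrt s" and "u \<equiv> (2 * \<rho> * c + \<rho>\<^sup>2 * t) / s"
  shows "u \<ge> -1" and "\<bar>u\<bar> \<le> 2 * w + w\<^sup>2"
proof -
  have sw2: "s * w\<^sup>2 = \<rho>\<^sup>2 * t"
    unfolding w_def using t0 sp by (simp add: power_divide power_mult_distrib)
  have "\<bar>c\<bar> \<le> sqrt s * sqrt t"
    using real_sqrt_le_mono[OF cs] by (simp add: real_sqrt_mult)
  then have "\<bar>2 * \<rho> * c\<bar> \<le> 2 * \<rho> * (sqrt s * sqrt t)"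
    using r0 by (simp add: abs_mult mult_left_mono)
  also have "\<dots> = s * (2 * w)"
    unfolding w_def using sp by (simp add: field_simps real_div_sqrt)
  finally have c_abs: "\<bar>2 * \<rho> * c\<bar> \<le> s * (2 * w)" .
  have "\<bar>2 * \<rho> * c + \<rho>\<^sup>2 * t\<bar> \<le> s * (2 * w + w\<^sup>2)"
    using c_abs sw2 t0 abs_triangle_ineq[of "2 * \<rho> * c" "\<rho>\<^sup>2 * t"] by (simp add: algebra_simps)
  then show "\<bar>u\<bar> \<le> 2 * w + w\<^sup>2"
    unfolding u_def using sp by (simp add: abs_divide pos_divide_le_eq ac_simps)
  have "s * (2 * w) \<le> s + s * w\<^sup>2"
    using sp mult_left_mono[of "2 * w" "1 + w\<^sup>2" s] sum_squares_bound[of 1 w]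
    by (simp add: power2_eq_square algebra_simps)
  then have "-s \<le> 2 * \<rho> * c + \<rho>\<^sup>2 * t"
    using c_abs sw2 by linarith
  then show "u \<ge> -1"
    unfolding u_def using sp by (simp add: field_simps)
qed

text \<open>For \<open>s > 0\<close> the claim is \<open>s\<^sup>p\<close> times the previous lemma, applied to
  \<open>u = (2 \<rho> c + \<rho>\<^sup>2 t) / s\<close> and \<open>w = \<rho> sqrt (t / s)\<close>.\<close>

lemma powr_perturb_le:
  fixes p \<rho> w0 s t c :: real
  assumes p1: "p \<ge> 1" and w0: "w0 > 0" and s0: "s \<ge> 0" and t0: "t \<ge> 0"
    and cs: "c\<^sup>2 \<le> s * t" and r0: "\<rho> \<ge> 0"
  shows "(s + 2 * \<rho> * c + \<rho>\<^sup>2 * t) powr p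
    \<le> s powr p + p * s powr (p - 1) * (2 * \<rho> * c + \<rho>\<^sup>2 * t)
       + quad_coeff p w0 * \<rho>\<^sup>2 * (s powr (p - 1) * t) + tail_coeff p w0 * (\<rho>\<^sup>2) powr p * t powr p"
proof (cases "s = 0")
  case True
  then have "(s + 2 * \<rho> * c + \<rho>\<^sup>2 * t) powr p = 1 * ((\<rho>\<^sup>2) powr p * t powr p)"
    using cs by (simp add: powr_mult)
  also have "\<dots> \<le> tail_coeff p w0 * ((\<rho>\<^sup>2) powr p * t powr p)"
    using tail_coeff_ge_1[OF p1 w0] by (intro mult_right_mono) auto
  finally show ?thesis
    using True p1 by (simp add: ac_simps)
next
  case False
  then have sp: "s > 0" using s0 by simp
  define w where "w = \<rho> * sqrt t / sqrt s"
  define u where "u = (2 * \<rho> * c + \<rho>\<^sup>2 * t) / s"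
  have u1: "u \<ge> -1" and uw: "\<bar>u\<bar> \<le> 2 * w + w\<^sup>2"
    unfolding u_def w_def using perturb_ratio_bounds[OF sp t0 cs r0] by auto
  have w_nonneg: "w \<ge> 0"
    unfolding w_def using r0 t0 s0 by simp
  have sw2: "s * w\<^sup>2 = \<rho>\<^sup>2 * t"
    unfolding w_def using t0 sp by (simp add: power_divide power_mult_distrib)
  have X: "s + 2 * \<rho> * c + \<rho>\<^sup>2 * t = s * (1 + u)"
    unfolding u_def using sp by (simp add: field_simps)
  have "(s + 2 * \<rho> * c + \<rho>\<^sup>2 * t) powr p - s powr p
      - p * s powr (p - 1) * (2 * \<rho> * c + \<rho>\<^sup>2 * t)
      = s powr p * ((1 + u) powr p - 1 - p * u)"
  proof -
    have lin: "p * s powr (p - 1) * (2 * \<rho> * c + \<rho>\<^sup>2 * t) = s powr p * (p * u)"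
    proof -
      have "s powr p = s * s powr (p - 1)"
        using powr_mult_base[of s "p - 1"] sp by simp
      then show ?thesis
        unfolding u_def using sp by (simp add: field_simps)
    qed
    have "(s * (1 + u)) powr p = s powr p * (1 + u) powr p"
      using sp u1 by (simp add: powr_mult)
    then show ?thesis
      unfolding X lin by (simp add: right_diff_distrib)
  qed
  also have "s powr p * ((1 + u) powr p - 1 - p * u)
      \<le> s powr p * (quad_coeff p w0 * w\<^sup>2 + tail_coeff p w0 * w powr (2 * p))"
    using powr_bregman_le_quad_tail[OF p1 u1 w0 w_nonneg uw] by (intro mult_left_mono) auto
  also have "\<dots> = quad_coeff p w0 * \<rho>\<^sup>2 * (s powr (p - 1) * t)
      + tail_coeff p w0 * (\<rho>\<^sup>2) powr p * t powr p"
  proof -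
    have "s powr p * w\<^sup>2 = s powr (p - 1) * (s * w\<^sup>2)"
      using powr_mult_base[of s "p - 1"] sp by (simp add: ac_simps)
    moreover have "s powr p * w powr (2 * p) = (\<rho>\<^sup>2) powr p * t powr p"
    proof -
      have "s powr p * w powr (2 * p) = (s * w\<^sup>2) powr p"
        using w_nonneg sp by (simp add: powr_mult sq_powr)
      then show ?thesis
        by (simp add: sw2 powr_mult)
    qed
    ultimately show ?thesis
      by (simp add: sw2 algebra_simps)
  qed
  finally show ?thesis
    by simp
qed

text \<open>The one-coordinate version of the theorem. In its use, \<open>s\<close> is the squared norm of the part
  of the function not depending on the resampled coordinate \<open>z\<close>, \<open>t z\<close> that of the derivative in
  direction \<open>z\<close>, and \<open>c z\<close> their correlation, which has mean zero.\<close>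

definition one_coord_bound :: "('a::finite \<Rightarrow> real) \<Rightarrow> real \<Rightarrow> real \<Rightarrow> real \<Rightarrow> real \<Rightarrow> bool" where
  "one_coord_bound \<mu> p \<rho> \<sigma> \<beta> \<longleftrightarrow>
    (\<forall>s t c. s \<ge> 0 \<longrightarrow> (\<forall>z. t z \<ge> 0) \<longrightarrow> (\<Sum>z\<in>UNIV. \<mu> z * c z) = 0
      \<longrightarrow> (\<forall>z. (c z)\<^sup>2 \<le> s * t z) \<longrightarrow>
      (\<Sum>z\<in>UNIV. \<mu> z * (s + 2 * \<rho> * c z + \<rho>\<^sup>2 * t z) powr p)
        \<le> (s + \<sigma>\<^sup>2 * (\<Sum>z\<in>UNIV. \<mu> z * t z)) powr p + \<beta> * (\<Sum>z\<in>UNIV. \<mu> z * t z powr p))"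

lemma one_coord_bound_holds:
  fixes \<mu> :: "'a::finite \<Rightarrow> real"
  assumes mu: "fin_prob \<mu>" and p1: "p \<ge> 1" and w0: "w0 > 0" and r0: "\<rho> \<ge> 0"
    and sig: "(p + quad_coeff p w0) * \<rho>\<^sup>2 \<le> p * \<sigma>\<^sup>2"
  shows "one_coord_bound \<mu> p \<rho> \<sigma> (tail_coeff p w0 * (\<rho>\<^sup>2) powr p)"
  unfolding one_coord_bound_def
proof (intro allI impI)
  fix s :: real and t c :: "'a \<Rightarrow> real"
  assume s0: "s \<ge> 0" and t0: "\<forall>z. t z \<ge> 0" and c0: "(\<Sum>z\<in>UNIV. \<mu> z * c z) = 0"
    and cs: "\<forall>z. (c z)\<^sup>2 \<le> s * t z"
  have mu0: "\<mu> z \<ge> 0" for z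
    using mu by (simp add: fin_prob_def)
  have mu1: "(\<Sum>z\<in>UNIV. \<mu> z) = 1"
    using mu by (simp add: fin_prob_def)
  define A where "A = quad_coeff p w0"
  define B where "B = tail_coeff p w0"
  define T where "T = (\<Sum>z\<in>UNIV. \<mu> z * t z)"
  define U where "U = (\<Sum>z\<in>UNIV. \<mu> z * t z powr p)"
  have T0: "T \<ge> 0"
    unfolding T_def using mu0 t0 by (intro sum_nonneg) auto
  have "(\<Sum>z\<in>UNIV. \<mu> z * (s + 2 * \<rho> * c z + \<rho>\<^sup>2 * t z) powr p)
      \<le> (\<Sum>z\<in>UNIV. \<mu> z * (s powr p + p * s powr (p - 1) * (2 * \<rho> * c z + \<rho>\<^sup>2 * t z)
            + A * \<rho>\<^sup>2 * (s powr (p - 1) * t z) + B * (\<rho>\<^sup>2) powr p * t z powr p))"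
    unfolding A_def B_def using mu0 t0 cs
    by (intro sum_mono mult_left_mono powr_perturb_le p1 w0 s0 r0) auto
  also have "\<dots> = s powr p * (\<Sum>z\<in>UNIV. \<mu> z)
      + p * s powr (p - 1) * (2 * \<rho> * (\<Sum>z\<in>UNIV. \<mu> z * c z) + \<rho>\<^sup>2 * T)
      + A * \<rho>\<^sup>2 * s powr (p - 1) * T + B * (\<rho>\<^sup>2) powr p * U"
    unfolding T_def U_def
    by (simp add: sum.distrib sum_distrib_left sum_distrib_right distrib_left ac_simps)
  also have "\<dots> = s powr p + p * s powr (p - 1) * ((p + A) * \<rho>\<^sup>2 / p * T)
      + B * (\<rho>\<^sup>2) powr p * U"
    using mu1 c0 p1 by (simp add: field_simps)
  also have "\<dots> \<le> s powr p + p * s powr (p - 1) * (\<sigma>\<^sup>2 * T)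
      + B * (\<rho>\<^sup>2) powr p * U"
    using sig p1 T0 unfolding A_def
    by (intro add_mono order_refl mult_left_mono mult_right_mono) (auto simp: divide_le_eq ac_simps)
  also have "\<dots> \<le> (s + \<sigma>\<^sup>2 * T) powr p + B * (\<rho>\<^sup>2) powr p * U"
    using powr_tangent_le[OF p1 s0, of "\<sigma>\<^sup>2 * T"] T0 by simp
  finally show "(\<Sum>z\<in>UNIV. \<mu> z * (s + 2 * \<rho> * c z + \<rho>\<^sup>2 * t z) powr p)
      \<le> (s + \<sigma>\<^sup>2 * T) powr p + tail_coeff p w0 * (\<rho>\<^sup>2) powr p * U"
    unfolding B_def .
qed

section \<open>Choice of the parameters\<close>

text \<open>The quantity \<open>\<sigma>\<^sup>2 + \<beta> r\<^bsup>2p-2\<^esup>\<close> for the smallest \<open>\<sigma>\<close> and the \<open>\<beta>\<close> allowed by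
  \<open>one_coord_bound_holds\<close>; the theorem holds as soon as it is at most \<open>1\<close>.\<close>

definition noise_budget :: "real \<Rightarrow> real \<Rightarrow> real \<Rightarrow> real \<Rightarrow> real" where
  "noise_budget p w0 \<rho> r =
    (1 + quad_coeff p w0 / p) * \<rho>\<^sup>2 + tail_coeff p w0 * (\<rho>\<^sup>2) powr p * r powr (2 * p - 2)"

lemma one_plus_powr_le_exp:
  fixes w q :: real
  assumes "w \<ge> 0" "q \<ge> 0"
  shows "(1 + w) powr q \<le> exp (w * q)"
proof -
  have "(1 + w) powr q \<le> exp w powr q"
    using assms by (intro powr_mono2) auto
  then show ?thesis
    by (simp add: exp_powr_real)
qed

lemma noise_budget_le_exp:
  fixes q w0 \<rho> r :: real
  assumes q2: "q \<ge> 2" and w0: "0 < w0" "w0 \<le> 1/4"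
  shows "noise_budget (q/2) w0 \<rho> r
      \<le> (1 + (q/2 - 1) * exp (w0 * q) * (81/16)) * \<rho>\<^sup>2
        + (exp (w0 * q) + (q/2 - 1)) / w0 powr q * ((\<rho>\<^sup>2) powr (q/2) * r powr (q - 2))"
proof -
  have growth: "max 1 ((1 + (2 * w0 + w0\<^sup>2)) powr (q/2 - 2)) \<le> exp (w0 * q)"
  proof -
    have "(1 + (2 * w0 + w0\<^sup>2)) powr (q/2 - 2) = (1 + w0) powr (q - 4)"
      using sq_powr[of "1 + w0" "q/2 - 2"] w0 by (simp add: power2_eq_square algebra_simps)
    also have "\<dots> \<le> (1 + w0) powr q"
      using w0 by (intro powr_mono) auto
    also have "\<dots> \<le> exp (w0 * q)"
      using w0 q2 by (intro one_plus_powr_le_exp) auto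
    finally show ?thesis
      using w0 q2 by simp
  qed
  have "(2 + w0)\<^sup>2 \<le> (2 + 1/4)\<^sup>2"
    using w0 by (intro power_mono) auto
  then have "(2 + w0)\<^sup>2 \<le> 81/16"
    by (simp add: power2_eq_square)
  then have "(q/2 - 1) * max 1 ((1 + (2 * w0 + w0\<^sup>2)) powr (q/2 - 2)) * (2 + w0)\<^sup>2
      \<le> (q/2 - 1) * exp (w0 * q) * (81/16)"
    using q2 growth by (intro mult_mono) auto
  moreover have "quad_coeff (q/2) w0 / (q/2)
      = (q/2 - 1) * max 1 ((1 + (2 * w0 + w0\<^sup>2)) powr (q/2 - 2)) * (2 + w0)\<^sup>2"
    unfolding quad_coeff_def using q2 by simp
  ultimately have "quad_coeff (q/2) w0 / (q/2) \<le> (q/2 - 1) * exp (w0 * q) * (81/16)"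
    by simp
  then have "(1 + quad_coeff (q/2) w0 / (q/2)) * \<rho>\<^sup>2
      \<le> (1 + (q/2 - 1) * exp (w0 * q) * (81/16)) * \<rho>\<^sup>2"
    by (intro mult_right_mono) auto
  moreover have "tail_coeff (q/2) w0 \<le> (exp (w0 * q) + (q/2 - 1)) / w0 powr q"
    unfolding tail_coeff_def using one_plus_powr_le_exp[of w0 q] w0 q2
    by (simp add: divide_right_mono)
  then have "tail_coeff (q/2) w0 * ((\<rho>\<^sup>2) powr (q/2) * r powr (q - 2))
      \<le> (exp (w0 * q) + (q/2 - 1)) / w0 powr q * ((\<rho>\<^sup>2) powr (q/2) * r powr (q - 2))"
    by (intro mult_right_mono) auto
  ultimately show ?thesis
    unfolding noise_budget_def by (simp add: ac_simps)
qed

lemma powr_ge_1_plus_ln: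
  fixes b y :: real
  assumes "b > 0"
  shows "1 + y * ln b \<le> b powr y"
  using exp_ge_add_one_self[of "y * ln b"] assms by (simp add: powr_def)

lemma ln_2_ge_half: "ln 2 \<ge> (1/2 :: real)"
proof -
  have "exp (1/2 :: real) \<le> 2"
    using exp_bound_half[of "1/2 :: real"] by simp
  then have "ln (exp (1/2 :: real)) \<le> ln 2"
    by (subst ln_le_cancel_iff) auto
  then show ?thesis
    by simp
qed

lemma powr_third_sqrt2_le:
  fixes q :: real
  assumes q2: "q \<ge> 2"
  shows "(1 + q/2) * (2 / (3 * sqrt 2)) powr q \<le> 4/9"
proof -
  define c :: real where "c = 2 / (3 * sqrt 2)"
  have c0: "c > 0" unfolding c_def by simp
  have c2: "c powr 2 = 2/9"
    unfolding c_def using powr_realpow[of "2 / (3 * sqrt 2)" 2] by (simp add: power2_eq_square)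
  have "sqrt 2 \<ge> (4/3 :: real)"
    by (rule real_le_rsqrt) (simp add: power2_eq_square)
  then have "ln 2 \<le> ln (1/c)"
    unfolding c_def by (subst ln_le_cancel_iff) auto
  then have "(q - 2) * (1/2) \<le> (q - 2) * ln (1/c)"
    using q2 ln_2_ge_half by (intro mult_left_mono) auto
  then have "q/2 \<le> (1/c) powr (q - 2)"
    using powr_ge_1_plus_ln[of "1/c" "q - 2"] c0 by simp
  then have "c powr (q - 2) \<le> 2/q"
    using c0 q2 by (simp add: powr_divide field_simps)
  moreover have "c powr q = c powr 2 * c powr (q - 2)"
    by (simp add: powr_add[symmetric])
  ultimately have "c powr q \<le> 2/9 * (2/q)"
    using c2 c0 by (simp add: mult_left_mono)
  then have "(1 + q/2) * c powr q \<le> (1 + q/2) * (2/9 * (2/q))"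
    using q2 by (intro mult_left_mono) auto
  also have "\<dots> \<le> 4/9"
    using q2 by (simp add: field_simps)
  finally show ?thesis unfolding c_def .
qed

lemma four_powr_ge:
  fixes q :: real
  assumes q2: "q \<ge> 2"
  shows "8 * q \<le> 4 powr q"
proof -
  have "q - 1 \<le> 1 + (q - 2) * ln 4"
    using q2 ln_2_ge_half mult_left_mono[of 1 "ln 4" "q - 2"]
    by (simp add: ln_realpow[of 2 2, simplified])
  also have "\<dots> \<le> 4 powr (q - 2)"
    by (rule powr_ge_1_plus_ln) simp
  finally have "16 * q - 16 \<le> 4 powr 2 * 4 powr (q - 2)"
    using powr_realpow[of 4 2] by simp
  also have "\<dots> = 4 powr q"
    using powr_add[of 4 2 "q - 2"] by simp
  finally show ?thesis
    using q2 by linarith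
qed

lemma quad_term_le_case1:
  fixes q \<rho> E :: real
  assumes q2: "q \<ge> 2" and rho0: "0 < \<rho>" and rho1: "\<rho> \<le> 1 / (3 * sqrt 2 * sqrt q)" and E: "E \<le> 2"
  shows "(1 + (q/2 - 1) * E * (81/16)) * \<rho>\<^sup>2 \<le> 81/288"
proof -
  have "\<rho>\<^sup>2 \<le> (1 / (3 * sqrt 2 * sqrt q))\<^sup>2"
    using rho1 rho0 by (intro power_mono) auto
  also have "\<dots> = 1 / (18 * q)"
    using q2 by (simp add: power2_eq_square field_simps)
  finally have rho2: "\<rho>\<^sup>2 \<le> 1 / (18 * q)" .
  have "(q/2 - 1) * E \<le> (q/2 - 1) * 2"
    using q2 by (intro mult_left_mono[OF E]) auto
  then have "1 + (q/2 - 1) * E * (81/16) \<le> 1 + (q/2 - 1) * 2 * (81/16)"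
    by (intro add_left_mono mult_right_mono) auto
  also have "\<dots> \<le> 81/16 * q"
    by (simp add: field_simps)
  finally have "(1 + (q/2 - 1) * E * (81/16)) * \<rho>\<^sup>2 \<le> 81/16 * q * (1 / (18 * q))"
    using rho2 q2 by (intro mult_mono) auto
  also have "\<dots> = 81/288"
    using q2 by simp
  finally show ?thesis .
qed

lemma tail_term_le_case1:
  fixes q r \<rho> E :: real
  assumes q2: "q \<ge> 2" and r0: "r > 0" and rho0: "0 < \<rho>"
    and rho1: "\<rho> * r powr ((q - 2) / q) \<le> 1 / (3 * sqrt 2 * q)" and E: "E \<le> 2"
  shows "(E + (q/2 - 1)) / (1 / (2 * q)) powr q * ((\<rho>\<^sup>2) powr (q/2) * r powr (q - 2)) \<le> 4/9"
proof -
  have "(\<rho> * r powr ((q - 2) / q)) powr q = (\<rho>\<^sup>2) powr (q/2) * r powr (q - 2)"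
  proof -
    have "(r powr ((q - 2) / q)) powr q = r powr (q - 2)"
      using q2 by (simp add: powr_powr)
    moreover have "\<rho> powr q = (\<rho>\<^sup>2) powr (q/2)"
      using sq_powr[of \<rho> "q/2"] rho0 by simp
    ultimately show ?thesis
      by (simp add: powr_mult)
  qed
  moreover have "(\<rho> * r powr ((q - 2) / q)) powr q \<le> (1 / (3 * sqrt 2 * q)) powr q"
    using rho1 rho0 q2 by (intro powr_mono2) auto
  ultimately have K: "(\<rho>\<^sup>2) powr (q/2) * r powr (q - 2) \<le> (1 / (3 * sqrt 2 * q)) powr q"
    by simp
  have "(E + (q/2 - 1)) / (1 / (2 * q)) powr q = (E + (q/2 - 1)) * (2 * q) powr q"
    using q2 by (simp add: powr_divide)
  also have "\<dots> \<le> (1 + q/2) * (2 * q) powr q"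
    using E by (intro mult_right_mono) auto
  finally have "(E + (q/2 - 1)) / (1 / (2 * q)) powr q * ((\<rho>\<^sup>2) powr (q/2) * r powr (q - 2))
      \<le> (1 + q/2) * (2 * q) powr q * (1 / (3 * sqrt 2 * q)) powr q"
    using K q2 by (intro mult_mono) auto
  also have "\<dots> = (1 + q/2) * (2 * q * (1 / (3 * sqrt 2 * q))) powr q"
    by (simp only: mult.assoc powr_mult)
  also have "2 * q * (1 / (3 * sqrt 2 * q)) = 2 / (3 * sqrt 2)"
    using q2 by simp
  also have "(1 + q/2) * (2 / (3 * sqrt 2)) powr q \<le> 4/9"
    using q2 by (rule powr_third_sqrt2_le)
  finally show ?thesis .
qed

lemma noise_budget_case1:
  fixes q r \<rho> :: real
  assumes q2: "q \<ge> 2" and r0: "r > 0" and rho0: "0 < \<rho>"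
    and rho1: "\<rho> \<le> 1 / (3 * sqrt 2) * min (1 / (r powr ((q - 2) / q) * q)) (1 / sqrt q)"
  shows "noise_budget (q/2) (1 / (2 * q)) \<rho> r \<le> 1"
proof -
  have w0: "0 < 1 / (2 * q)" "1 / (2 * q) \<le> 1/4"
    using q2 by (auto simp: field_simps)
  have "exp (1 / (2 * q) * q) \<le> 2"
    using exp_bound_half[of "1/2 :: real"] q2 by simp
  moreover have "\<rho> * r powr ((q - 2) / q) \<le> 1 / (3 * sqrt 2 * q)"
  proof -
    have "\<rho> \<le> 1 / (3 * sqrt 2) * (1 / (r powr ((q - 2) / q) * q))"
      using rho1 mult_left_mono[OF min.cobounded1[of "1 / (r powr ((q - 2) / q) * q)" "1 / sqrt q"],
          of "1 / (3 * sqrt 2)"] by simp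
    then show ?thesis
      using r0 q2 by (simp add: field_simps)
  qed
  moreover have "\<rho> \<le> 1 / (3 * sqrt 2 * sqrt q)"
    using rho1 mult_left_mono[OF min.cobounded2[of "1 / (r powr ((q - 2) / q) * q)" "1 / sqrt q"],
        of "1 / (3 * sqrt 2)"] by simp
  ultimately show ?thesis
    using noise_budget_le_exp[OF q2 w0, of \<rho> r] quad_term_le_case1[OF q2 rho0]
      tail_term_le_case1[OF q2 r0 rho0]
    by fastforce
qed

lemma quad_term_le_case2:
  fixes Q \<rho> :: real
  assumes Q1: "Q \<ge> 1" and rho0: "0 < \<rho>" and rho1: "\<rho> \<le> 1 / (4 * Q ^ 3)"
  shows "(1 + (Q ^ 4 / 2 - 1) * Q * (81/16)) * \<rho>\<^sup>2 \<le> 113/512"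
proof -
  have "\<rho>\<^sup>2 \<le> (1 / (4 * Q ^ 3))\<^sup>2"
    using rho0 rho1 by (intro power_mono) auto
  then have rho2: "\<rho>\<^sup>2 \<le> 1 / (16 * Q ^ 6)"
    by (simp add: power2_eq_square field_simps power_eq_if)
  have "(Q ^ 4 / 2 - 1) * Q * (81/16) \<le> Q ^ 4 / 2 * Q * (81/16)"
    using Q1 by (intro mult_right_mono) auto
  moreover have "Q ^ 4 / 2 * Q * (81/16) = 81/32 * Q ^ 5"
    by (simp add: eval_nat_numeral)
  moreover have "1 \<le> Q ^ 5"
    using Q1 by simp
  ultimately have "1 + (Q ^ 4 / 2 - 1) * Q * (81/16) \<le> 113/32 * Q ^ 5"
    by linarith
  then have "(1 + (Q ^ 4 / 2 - 1) * Q * (81/16)) * \<rho>\<^sup>2 \<le> 113/32 * Q ^ 5 * (1 / (16 * Q ^ 6))"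
    using rho2 Q1 by (intro mult_mono) auto
  also have "\<dots> \<le> 113/512"
    using Q1 by (simp add: field_simps power_eq_if)
  finally show ?thesis .
qed

lemma tail_term_le_case2:
  fixes q r \<rho> w0 E :: real
  assumes q2: "q \<ge> 2" and r1: "r \<ge> 1" and rho0: "0 < \<rho>" and w0: "0 < w0"
    and rho1: "\<rho> * r \<le> w0 / 4" and E: "E + (q/2 - 1) \<le> 3/2 * q"
  shows "(E + (q/2 - 1)) / w0 powr q * ((\<rho>\<^sup>2) powr (q/2) * r powr (q - 2)) \<le> 3/16"
proof -
  have "(\<rho> * r) powr q \<le> (w0 / 4) powr q"
    using rho1 rho0 r1 q2 by (intro powr_mono2) auto
  moreover have "(\<rho>\<^sup>2) powr (q/2) * r powr (q - 2) \<le> (\<rho> * r) powr q"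
    using sq_powr[of \<rho> "q/2"] rho0 r1 powr_mono[of "q - 2" q r]
    by (simp add: powr_mult mult_left_mono)
  ultimately have K: "(\<rho>\<^sup>2) powr (q/2) * r powr (q - 2) \<le> w0 powr q / 4 powr q"
    by (simp add: powr_divide)
  have "(E + (q/2 - 1)) / w0 powr q * ((\<rho>\<^sup>2) powr (q/2) * r powr (q - 2))
      \<le> (3/2 * q) / w0 powr q * (w0 powr q / 4 powr q)"
    using E K w0 q2 by (intro mult_mono divide_right_mono) auto
  also have "\<dots> = (3/2 * q) / 4 powr q"
    using w0 by simp
  also have "\<dots> \<le> (3/2 * q) / (8 * q)"
    using four_powr_ge[OF q2] q2 by (intro divide_left_mono) auto
  also have "\<dots> = 3/16"
    using q2 by simp
  finally show ?thesis .
qed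

text \<open>With \<open>w\<^sub>0 = ln q / (4 q)\<close> the growth factor \<open>exp (w\<^sub>0 q)\<close> is \<open>Q = q\<^bsup>1/4\<^esup>\<close>.\<close>

lemma noise_budget_case2:
  fixes q r \<rho> :: real
  assumes q2: "q \<ge> 2" and r1: "r \<ge> 1" and rho0: "0 < \<rho>" and rho1: "\<rho> \<le> ln q / (16 * r * q)"
  shows "noise_budget (q/2) (ln q / (4 * q)) \<rho> r \<le> 1"
proof -
  define w0 where "w0 = ln q / (4 * q)"
  define Q where "Q = q powr (1/4)"
  have w0: "0 < w0" "w0 \<le> 1/4"
    unfolding w0_def using q2 ln_le_minus_one[of q] by (auto simp: field_simps)
  have Q1: "Q \<ge> 1"
    unfolding Q_def using q2 by (intro ge_one_powr_ge_zero) auto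
  have Q4: "Q ^ 4 = q"
    unfolding Q_def using q2 by (simp add: powr_power)
  have expQ: "exp (w0 * q) = Q"
    unfolding w0_def Q_def using q2 by (simp add: powr_def)
  have "ln q \<le> 4 * Q"
    using ln_le_minus_one[of Q] Q1 q2 unfolding Q_def by (simp add: ln_powr)
  then have "ln q / (16 * q) \<le> 4 * Q / (16 * q)"
    using q2 by (intro divide_right_mono) auto
  moreover have "ln q / (16 * r * q) \<le> ln q / (16 * q)"
    using r1 q2 by (intro divide_left_mono) auto
  ultimately have "\<rho> \<le> 4 * Q / (16 * Q ^ 4)"
    using rho1 Q4 by simp
  also have "\<dots> = 1 / (4 * Q ^ 3)"
    using Q1 by (simp add: field_simps power_eq_if)
  finally have "(1 + (Q ^ 4 / 2 - 1) * Q * (81/16)) * \<rho>\<^sup>2 \<le> 113/512"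
    by (rule quad_term_le_case2[OF Q1 rho0])
  then have T1: "(1 + (q/2 - 1) * exp (w0 * q) * (81/16)) * \<rho>\<^sup>2 \<le> 113/512"
    unfolding expQ Q4 .
  have "\<rho> * r \<le> w0 / 4"
    using mult_right_mono[OF rho1, of r] r1 unfolding w0_def by (simp add: field_simps)
  moreover have "exp (w0 * q) + (q/2 - 1) \<le> 3/2 * q"
    using expQ Q4 Q1 power_increasing[of 1 4 Q] by simp
  ultimately have T2: "(exp (w0 * q) + (q/2 - 1)) / w0 powr q * ((\<rho>\<^sup>2) powr (q/2) * r powr (q - 2)) \<le> 3/16"
    by (rule tail_term_le_case2[OF q2 r1 rho0 w0(1)])
  show ?thesis
    using noise_budget_le_exp[OF q2 w0, of \<rho> r] T1 T2 unfolding w0_def by linarith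
qed

section \<open>Product kernels\<close>

text \<open>\<open>kernel_on k J g x\<close> resamples the coordinates in \<open>J\<close> of \<open>x\<close> independently, \<open>x\<^sub>i\<close> being
  replaced by \<open>a\<close> with weight \<open>k x\<^sub>i a\<close>, and averages \<open>g\<close> over the result; \<open>kernel_at k i\<close> does
  this for the single coordinate \<open>i\<close>. With \<open>avg_kernel\<close> these are the expectations \<open>E\<^sub>J\<close> and
  \<open>E\<^sub>i\<close>, with \<open>noise_kernel\<close> the noise operators \<open>T\<^sub>\<rho>\<close> acting on \<open>J\<close> and on \<open>i\<close>.\<close>

definition kernel_on ::
    "('a::finite \<Rightarrow> 'a \<Rightarrow> real) \<Rightarrow> nat set \<Rightarrow> ((nat \<Rightarrow> 'a) \<Rightarrow> real) \<Rightarrow> (nat \<Rightarrow> 'a) \<Rightarrow> real"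
  where "kernel_on k J g x = (\<Sum>y\<in>PiE J (\<lambda>_. UNIV). (\<Prod>i\<in>J. k (x i) (y i)) * g (override_on x y J))"

definition kernel_at ::
    "('a::finite \<Rightarrow> 'a \<Rightarrow> real) \<Rightarrow> nat \<Rightarrow> ((nat \<Rightarrow> 'a) \<Rightarrow> real) \<Rightarrow> (nat \<Rightarrow> 'a) \<Rightarrow> real"
  where "kernel_at k i g x = (\<Sum>a\<in>UNIV. k (x i) a * g (x(i := a)))"

lemma kernel_on_empty[simp]: "kernel_on k {} g x = g x"
  by (simp add: kernel_on_def override_on_def)

lemma kernel_on_insert:
  assumes "finite J" "i \<notin> J"
  shows "kernel_on k (insert i J) g x = kernel_at k i (kernel_on k J g) x"
proof -
  have override_eq: "override_on x (h(i:=a)) (insert i J) = override_on (x(i:=a)) h J" for h a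
    using assms(2) by (auto simp: override_on_def fun_eq_iff)
  have pr: "(\<Prod>j\<in>insert i J. k (x j) ((h(i:=a)) j))
      = k (x i) a * (\<Prod>j\<in>J. k (x j) (h j))" for h a
  proof -
    have "(\<Prod>j\<in>J. k (x j) ((h(i:=a)) j)) = (\<Prod>j\<in>J. k (x j) (h j))"
      using assms(2) by (intro prod.cong) auto
    then show ?thesis using assms by (simp add: prod.insert)
  qed
  have "kernel_on k (insert i J) g x = (\<Sum>(a,h)\<in>UNIV \<times> PiE J (\<lambda>_. UNIV).
        (\<Prod>j\<in>insert i J. k (x j) ((h(i:=a)) j))
            * g (override_on x (h(i:=a)) (insert i J)))"
    unfolding kernel_on_def PiE_insert_eq
    by (subst sum.reindex) (use inj_combinator[OF assms(2)] in \<open>auto simp: case_prod_beta\<close>)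
  also have "\<dots> = (\<Sum>a\<in>UNIV. \<Sum>h\<in>PiE J (\<lambda>_. UNIV). k (x i) a
      * ((\<Prod>j\<in>J. k (x j) (h j)) * g (override_on (x(i:=a)) h J)))"
    unfolding pr override_eq
    by (subst sum.cartesian_product[symmetric]) (simp only: case_prod_conv mult.assoc)
  also have "\<dots> = kernel_at k i (kernel_on k J g) x"
    unfolding kernel_at_def kernel_on_def
  proof (intro sum.cong refl)
    fix a
    have "(\<Prod>j\<in>J. k ((x(i:=a)) j) (h j)) = (\<Prod>j\<in>J. k (x j) (h j))" for h
      using assms(2) by (intro prod.cong) auto
    then show "(\<Sum>h\<in>PiE J (\<lambda>_. UNIV). k (x i) a
        * ((\<Prod>j\<in>J. k (x j) (h j)) * g (override_on (x(i:=a)) h J)))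
      = k (x i) a * (\<Sum>y\<in>PiE J (\<lambda>_. UNIV). (\<Prod>j\<in>J. k ((x(i:=a)) j) (y j))
          * g (override_on (x(i:=a)) y J))"
      by (simp add: sum_distrib_left)
  qed
  finally show ?thesis .
qed

definition indep_coord :: "nat \<Rightarrow> ((nat \<Rightarrow> 'a) \<Rightarrow> real) \<Rightarrow> bool" where
  "indep_coord i f \<longleftrightarrow> (\<forall>x a. f (x(i := a)) = f x)"

definition avg_kernel :: "('a::finite \<Rightarrow> real) \<Rightarrow> 'a \<Rightarrow> 'a \<Rightarrow> real" where
  "avg_kernel \<mu> u a = \<mu> a"

definition noise_kernel :: "('a::finite \<Rightarrow> real) \<Rightarrow> real \<Rightarrow> 'a \<Rightarrow> 'a \<Rightarrow> real" where
  "noise_kernel \<mu> \<rho> u a = \<rho> * (if a = u then 1 else 0) + (1 - \<rho>) * \<mu> a"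

abbreviation avg_on ::
    "('a::finite \<Rightarrow> real) \<Rightarrow> nat set \<Rightarrow> ((nat \<Rightarrow> 'a) \<Rightarrow> real) \<Rightarrow> (nat \<Rightarrow> 'a) \<Rightarrow> real"
  where "avg_on \<mu> \<equiv> kernel_on (avg_kernel \<mu>)"

abbreviation avg_at ::
    "('a::finite \<Rightarrow> real) \<Rightarrow> nat \<Rightarrow> ((nat \<Rightarrow> 'a) \<Rightarrow> real) \<Rightarrow> (nat \<Rightarrow> 'a) \<Rightarrow> real"
  where "avg_at \<mu> \<equiv> kernel_at (avg_kernel \<mu>)"

abbreviation noise_on :: "('a::finite \<Rightarrow> real) \<Rightarrow> real \<Rightarrow> nat set \<Rightarrow>
    ((nat \<Rightarrow> 'a) \<Rightarrow> real) \<Rightarrow> (nat \<Rightarrow> 'a) \<Rightarrow> real"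
  where "noise_on \<mu> \<rho> \<equiv> kernel_on (noise_kernel \<mu> \<rho>)"

abbreviation noise_at :: "('a::finite \<Rightarrow> real) \<Rightarrow> real \<Rightarrow> nat \<Rightarrow>
    ((nat \<Rightarrow> 'a) \<Rightarrow> real) \<Rightarrow> (nat \<Rightarrow> 'a) \<Rightarrow> real"
  where "noise_at \<mu> \<rho> \<equiv> kernel_at (noise_kernel \<mu> \<rho>)"

lemma kernel_at_commute:
  assumes "i \<noteq> j"
  shows "kernel_at k i (kernel_at k' j g) x = kernel_at k' j (kernel_at k i g) x"
proof -
  have "kernel_at k i (kernel_at k' j g) x
      = (\<Sum>a\<in>UNIV. \<Sum>b\<in>UNIV. k (x i) a * (k' (x j) b * g (x(j := b, i := a))))"
    unfolding kernel_at_def using assms by (simp add: sum_distrib_left fun_upd_twist)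
  also have "\<dots> = (\<Sum>b\<in>UNIV. \<Sum>a\<in>UNIV. k' (x j) b
      * (k (x i) a * g (x(j := b, i := a))))"
    by (subst sum.swap) (simp add: ac_simps)
  also have "\<dots> = kernel_at k' j (kernel_at k i g) x"
    unfolding kernel_at_def using assms by (simp add: sum_distrib_left)
  finally show ?thesis .
qed

lemma kernel_at_add: "kernel_at k i (\<lambda>x. f x + g x) x = kernel_at k i f x + kernel_at k i g x"
  by (simp add: kernel_at_def distrib_left sum.distrib)

lemma kernel_at_diff: "kernel_at k i (\<lambda>x. f x - g x) x = kernel_at k i f x - kernel_at k i g x"
  by (simp add: kernel_at_def right_diff_distrib sum_subtractf)

lemma kernel_at_cmult: "kernel_at k i (\<lambda>x. c * f x) x = c * kernel_at k i f x"
  by (simp add: kernel_at_def sum_distrib_left ac_simps)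

lemma kernel_at_sum: "kernel_at k i (\<lambda>x. \<Sum>s\<in>A. f s x) x = (\<Sum>s\<in>A. kernel_at k i (f s) x)"
  by (simp add: kernel_at_def sum_distrib_left sum.swap[of _ A])

lemma kernel_at_mono:
  assumes "\<And>u a. k u a \<ge> 0" "\<And>x. f x \<le> g x"
  shows "kernel_at k i f x \<le> kernel_at k i g x"
  unfolding kernel_at_def by (rule sum_mono, rule mult_left_mono) (use assms in auto)

lemma kernel_on_add: "kernel_on k J (\<lambda>x. f x + g x) x = kernel_on k J f x + kernel_on k J g x"
  by (simp add: kernel_on_def distrib_left sum.distrib)

lemma kernel_on_diff: "kernel_on k J (\<lambda>x. f x - g x) x = kernel_on k J f x - kernel_on k J g x"
  by (simp add: kernel_on_def right_diff_distrib sum_subtractf)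

lemma kernel_on_cmult: "kernel_on k J (\<lambda>x. c * f x) x = c * kernel_on k J f x"
  by (simp add: kernel_on_def sum_distrib_left ac_simps)

lemma kernel_on_zero: "kernel_on k J (\<lambda>x. 0) x = 0"
  by (simp add: kernel_on_def)

lemma kernel_on_mono:
  assumes "\<And>u a. k u a \<ge> 0" "\<And>x. f x \<le> g x"
  shows "kernel_on k J f x \<le> kernel_on k J g x"
  unfolding kernel_on_def
  by (rule sum_mono, rule mult_left_mono) (use assms in \<open>auto intro: prod_nonneg\<close>)

lemma kernel_on_cong:
  assumes "\<And>x. f x = g x"
  shows "kernel_on k J f x = kernel_on k J g x"
  using assms by (simp add: kernel_on_def)

lemma indep_coord_avg_at: "indep_coord i (avg_at \<mu> i f)"
  unfolding indep_coord_def kernel_at_def avg_kernel_def by auto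

lemma indep_coord_kernel_on:
  assumes "indep_coord i f" "i \<notin> J"
  shows "indep_coord i (kernel_on k J f)"
proof -
  have "override_on (x(i:=a)) y J = (override_on x y J)(i := a)" for x a y
    using assms(2) by (auto simp: override_on_def fun_eq_iff)
  moreover have "(\<Prod>j\<in>J. k ((x(i:=a)) j) (y j)) = (\<Prod>j\<in>J. k (x j) (y j))" for x a y
    using assms(2) by (intro prod.cong) auto
  ultimately show ?thesis
    using assms unfolding indep_coord_def kernel_on_def by (metis (no_types, lifting) sum.cong)
qed

lemma kernel_at_indep_mult:
  assumes "indep_coord i f"
  shows "kernel_at k i (\<lambda>x. f x * g x) x = f x * kernel_at k i g x"
  using assms unfolding indep_coord_def kernel_at_def by (simp add: sum_distrib_left ac_simps)

lemma avg_at_indep_coord: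
  assumes "fin_prob \<mu>" "indep_coord i f"
  shows "avg_at \<mu> i f x = f x"
  using assms unfolding indep_coord_def kernel_at_def avg_kernel_def fin_prob_def
  by (simp flip: sum_distrib_right)

lemma kernel_on_kernel_at_commute:
  assumes "finite J" "i \<notin> J"
  shows "kernel_on k J (kernel_at k' i g) x = kernel_at k' i (kernel_on k J g) x"
  using assms
proof (induction J arbitrary: x rule: finite_induct)
  case empty
  then show ?case by simp
next
  case (insert j J)
  have "kernel_on k (insert j J) (kernel_at k' i g) x
      = kernel_at k j (kernel_on k J (kernel_at k' i g)) x"
    using insert by (simp add: kernel_on_insert)
  also have "\<dots> = kernel_at k j (kernel_at k' i (kernel_on k J g)) x"
  proof -
    have "kernel_on k J (kernel_at k' i g) = kernel_at k' i (kernel_on k J g)"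
      using insert by (intro ext) simp
    then show ?thesis by simp
  qed
  also have "\<dots> = kernel_at k' i (kernel_at k j (kernel_on k J g)) x"
    using insert by (simp add: kernel_at_commute)
  also have "\<dots> = kernel_at k' i (kernel_on k (insert j J) g) x"
  proof -
    have "kernel_on k (insert j J) g = kernel_at k j (kernel_on k J g)"
      using insert by (intro ext) (simp add: kernel_on_insert)
    then show ?thesis by simp
  qed
  finally show ?case .
qed

lemma kernel_on_insert_inner:
  assumes "finite J" "i \<notin> J"
  shows "kernel_on k (insert i J) g x = kernel_on k J (kernel_at k i g) x"
  using assms by (simp add: kernel_on_insert kernel_on_kernel_at_commute)

lemma kernel_on_union:
  assumes "finite A" "finite B" "A \<inter> B = {}"
  shows "kernel_on k (A \<union> B) g x = kernel_on k A (kernel_on k B g) x"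
  using assms
proof (induction A arbitrary: x rule: finite_induct)
  case empty
  then show ?case by simp
next
  case (insert i A)
  have "kernel_on k (insert i A \<union> B) g x = kernel_at k i (kernel_on k (A \<union> B) g) x"
    using insert by (simp add: kernel_on_insert)
  also have "\<dots> = kernel_at k i (kernel_on k A (kernel_on k B g)) x"
  proof -
    have "kernel_on k (A \<union> B) g = kernel_on k A (kernel_on k B g)"
      using insert by (intro ext) simp
    then show ?thesis by simp
  qed
  also have "\<dots> = kernel_on k (insert i A) (kernel_on k B g) x"
    using insert by (simp add: kernel_on_insert)
  finally show ?case .
qed

lemma avg_kernel_nonneg: "fin_prob \<mu> \<Longrightarrow> avg_kernel \<mu> u a \<ge> 0"
  by (simp add: fin_prob_def avg_kernel_def)

lemma kernel_on_square_expand: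
  "kernel_on k R (\<lambda>x. (P x + a * Q x)\<^sup>2) v
    = kernel_on k R (\<lambda>x. (P x)\<^sup>2) v + 2 * a * kernel_on k R (\<lambda>x. P x * Q x) v
      + a\<^sup>2 * kernel_on k R (\<lambda>x. (Q x)\<^sup>2) v"
proof -
  have "kernel_on k R (\<lambda>x. (P x + a * Q x)\<^sup>2) v
      = kernel_on k R (\<lambda>x. (P x)\<^sup>2 + ((2 * a) * (P x * Q x) + a\<^sup>2 * (Q x)\<^sup>2)) v"
    by (intro kernel_on_cong) (simp add: power2_eq_square algebra_simps)
  then show ?thesis
    by (simp add: kernel_on_add kernel_on_cmult)
qed

lemma kernel_on_nonneg:
  assumes "\<And>u a. k u a \<ge> 0" "\<And>x. f x \<ge> 0"
  shows "kernel_on k J f x \<ge> 0"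
  using kernel_on_mono[of k "\<lambda>_. 0" f J x] assms by (simp add: kernel_on_zero)

lemma kernel_on_Cauchy_Schwarz:
  assumes "\<And>u a. k u a \<ge> 0"
  shows "(kernel_on k J (\<lambda>x. f x * g x) x)\<^sup>2
    \<le> kernel_on k J (\<lambda>x. (f x)\<^sup>2) x * kernel_on k J (\<lambda>x. (g x)\<^sup>2) x"
proof -
  define w where "w y = (\<Prod>i\<in>J. k (x i) (y i))" for y
  have w0: "w y \<ge> 0" for y unfolding w_def using assms by (intro prod_nonneg) auto
  have "kernel_on k J (\<lambda>x. f x * g x) x
      = (\<Sum>y\<in>PiE J (\<lambda>_. UNIV). (sqrt (w y) * f (override_on x y J))
          * (sqrt (w y) * g (override_on x y J)))"
    unfolding kernel_on_def w_def[symmetric] using w0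
    by (intro sum.cong) (auto simp: ac_simps real_sqrt_mult[symmetric])
  moreover have "kernel_on k J (\<lambda>x. (f x)\<^sup>2) x
      = (\<Sum>y\<in>PiE J (\<lambda>_. UNIV). (sqrt (w y) * f (override_on x y J))\<^sup>2)"
    unfolding kernel_on_def w_def[symmetric] using w0
    by (intro sum.cong) (auto simp: power_mult_distrib)
  moreover have "kernel_on k J (\<lambda>x. (g x)\<^sup>2) x
      = (\<Sum>y\<in>PiE J (\<lambda>_. UNIV). (sqrt (w y) * g (override_on x y J))\<^sup>2)"
    unfolding kernel_on_def w_def[symmetric] using w0
    by (intro sum.cong) (auto simp: power_mult_distrib)
  ultimately show ?thesis by (simp only: Cauchy_Schwarz_ineq_sum)
qed

lemma indep_coord_comp: "indep_coord i f \<Longrightarrow> indep_coord i (\<lambda>x. h (f x))"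
  by (simp add: indep_coord_def)

section \<open>Derivatives\<close>

definition diff_kernel :: "('a::finite \<Rightarrow> real) \<Rightarrow> 'a \<Rightarrow> 'a \<Rightarrow> real" where
  "diff_kernel \<mu> u a = (if a = u then 1 else 0) - \<mu> a"

lemma sum_delta_update:
  fixes x :: "nat \<Rightarrow> 'a::finite" and f :: "(nat \<Rightarrow> 'a) \<Rightarrow> real"
  shows "(\<Sum>a\<in>UNIV. (if a = x i then 1 else 0) * f (x(i := a))) = f x"
proof -
  have "(\<Sum>a\<in>UNIV. (if a = x i then 1 else 0) * f (x(i := a)))
      = (\<Sum>a\<in>UNIV. if a = x i then f (x(i := a)) else 0)"
    by (intro sum.cong) auto
  also have "\<dots> = f (x(i := x i))" by (subst sum.delta) simp_all
  also have "\<dots> = f x" by simp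
  finally show ?thesis .
qed

lemma E_op_eq_kernel_at: "E_op \<mu> i f = avg_at \<mu> i f"
  by (simp add: E_op_def kernel_at_def avg_kernel_def fun_eq_iff)

lemma L_op_eq_kernel_at: "L_op \<mu> i f = kernel_at (diff_kernel \<mu>) i f"
proof
  fix x
  have "kernel_at (diff_kernel \<mu>) i f x
      = (\<Sum>a\<in>UNIV. (if a = x i then 1 else 0) * f (x(i := a))) - E_op \<mu> i f x"
    by (simp add: kernel_at_def diff_kernel_def E_op_def left_diff_distrib sum_subtractf)
  then show "L_op \<mu> i f x = kernel_at (diff_kernel \<mu>) i f x"
    by (simp add: sum_delta_update L_op_def)
qed

lemma kernel_at_noise: "noise_at \<mu> \<rho> i f x = E_op \<mu> i f x + \<rho> * L_op \<mu> i f x"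
proof -
  have "noise_at \<mu> \<rho> i f x
      = (\<Sum>a\<in>UNIV. \<rho> * ((if a = x i then 1 else 0) * f (x(i := a)))
          + (1 - \<rho>) * (\<mu> a * f (x(i := a))))"
    unfolding kernel_at_def noise_kernel_def by (intro sum.cong) (auto simp: algebra_simps)
  also have "\<dots> = \<rho> * (\<Sum>a\<in>UNIV. (if a = x i then 1 else 0) * f (x(i := a)))
      + (1 - \<rho>) * E_op \<mu> i f x"
    by (simp add: sum.distrib sum_distrib_left E_op_def)
  finally have "noise_at \<mu> \<rho> i f x
      = \<rho> * (\<Sum>a\<in>UNIV. (if a = x i then 1 else 0) * f (x(i := a)))
          + (1 - \<rho>) * E_op \<mu> i f x" .
  then show ?thesis by (simp only: sum_delta_update) (simp add: L_op_def algebra_simps)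
qed

lemma indep_coord_E_op: "indep_coord i (E_op \<mu> i f)"
  by (simp add: E_op_eq_kernel_at indep_coord_avg_at)

lemma E_op_idem: "fin_prob \<mu> \<Longrightarrow> E_op \<mu> i (E_op \<mu> i f) x = E_op \<mu> i f x"
  by (metis E_op_eq_kernel_at avg_at_indep_coord indep_coord_E_op)

lemma E_op_L_op: "fin_prob \<mu> \<Longrightarrow> E_op \<mu> i (L_op \<mu> i f) x = 0"
proof -
  assume a: "fin_prob \<mu>"
  have "E_op \<mu> i (L_op \<mu> i f) x = E_op \<mu> i f x - E_op \<mu> i (E_op \<mu> i f) x"
    unfolding L_op_def E_op_eq_kernel_at by (rule kernel_at_diff)
  then show ?thesis using E_op_idem[OF a] by simp
qed

lemma LS_op_empty[simp]: "LS_op \<mu> {} f = f"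
  by (simp add: LS_op_def)

lemma L_op_commute: "i \<noteq> j \<Longrightarrow> L_op \<mu> i (L_op \<mu> j f) = L_op \<mu> j (L_op \<mu> i f)"
  by (simp add: L_op_eq_kernel_at kernel_at_commute fun_eq_iff)

lemma foldr_insort_L:
  assumes "i \<notin> set xs"
  shows "foldr (L_op \<mu>) (insort i xs) f = L_op \<mu> i (foldr (L_op \<mu>) xs f)"
  using assms
proof (induction xs)
  case Nil
  then show ?case by simp
next
  case (Cons a xs)
  then show ?case by (auto simp: L_op_commute)
qed

lemma LS_op_insert:
  assumes "finite S" "i \<notin> S"
  shows "LS_op \<mu> (insert i S) f = L_op \<mu> i (LS_op \<mu> S f)"
  using assms by (simp add: LS_op_def sorted_list_of_set_insert foldr_insort_L)

lemma LS_op_kernel_at: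
  assumes "finite S" "i \<notin> S"
  shows "LS_op \<mu> S (kernel_at k i g) = kernel_at k i (LS_op \<mu> S g)"
  using assms
proof (induction S rule: finite_induct)
  case empty
  then show ?case by simp
next
  case (insert j S)
  have "LS_op \<mu> (insert j S) (kernel_at k i g) = L_op \<mu> j (kernel_at k i (LS_op \<mu> S g))"
    using insert by (simp add: LS_op_insert)
  also have "\<dots> = kernel_at k i (L_op \<mu> j (LS_op \<mu> S g))"
    using insert by (simp add: L_op_eq_kernel_at kernel_at_commute fun_eq_iff)
  also have "\<dots> = kernel_at k i (LS_op \<mu> (insert j S) g)"
    using insert by (simp add: LS_op_insert)
  finally show ?case .
qed

lemma LS_op_insert_inner:
  assumes "finite S" "i \<notin> S"
  shows "LS_op \<mu> (insert i S) f = LS_op \<mu> S (L_op \<mu> i f)"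
  using assms by (simp add: LS_op_insert L_op_eq_kernel_at LS_op_kernel_at)

text \<open>The energy of \<open>g\<close> splits orthogonally as \<open>\<parallel>E\<^sub>ig\<parallel>\<^sup>2 + \<parallel>L\<^sub>ig\<parallel>\<^sup>2\<close>, which
  dominates \<open>\<parallel>E\<^sub>ig + \<sigma> L\<^sub>ig\<parallel>\<^sup>2 + c \<parallel>L\<^sub>ig\<parallel>\<^sup>2\<close>.\<close>

lemma kernel_on_noise_at_sq_le:
  assumes mu: "fin_prob \<mu>" and J: "finite J" "i \<in> J" and sc: "\<sigma>\<^sup>2 + c \<le> 1"
  shows "avg_on \<mu> J (\<lambda>w. (noise_at \<mu> \<sigma> i g w)\<^sup>2 + c * (L_op \<mu> i g w)\<^sup>2) x
    \<le> avg_on \<mu> J (\<lambda>w. (g w)\<^sup>2) x"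
proof -
  define Eg where "Eg = E_op \<mu> i g"
  define Lg where "Lg = L_op \<mu> i g"
  have J_eq: "J = insert i (J - {i})" and fin: "finite (J - {i})" "i \<notin> J - {i}"
    using J by auto
  have cross: "avg_on \<mu> J (\<lambda>w. Eg w * Lg w) x = 0"
  proof -
    have "avg_at \<mu> i (\<lambda>w. Eg w * Lg w) = (\<lambda>_. 0)"
      using kernel_at_indep_mult[of i Eg "avg_kernel \<mu>" Lg] E_op_L_op[OF mu, of i g]
      unfolding Eg_def Lg_def by (simp add: indep_coord_avg_at E_op_eq_kernel_at fun_eq_iff)
    then show ?thesis
      using kernel_on_insert_inner[OF fin] J_eq by (metis kernel_on_zero)
  qed
  have "avg_on \<mu> J (\<lambda>w. (g w)\<^sup>2) x
      - avg_on \<mu> J (\<lambda>w. (noise_at \<mu> \<sigma> i g w)\<^sup>2 + c * (Lg w)\<^sup>2) x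
      = avg_on \<mu> J (\<lambda>w. (1 - \<sigma>\<^sup>2 - c) * (Lg w)\<^sup>2 + (2 * (1 - \<sigma>)) * (Eg w * Lg w)) x"
    unfolding kernel_on_diff[symmetric] Eg_def Lg_def
    by (intro kernel_on_cong) (simp add: kernel_at_noise L_op_def power2_eq_square algebra_simps)
  also have "\<dots> = (1 - \<sigma>\<^sup>2 - c) * avg_on \<mu> J (\<lambda>w. (Lg w)\<^sup>2) x"
    by (simp add: kernel_on_add kernel_on_cmult cross)
  also have "\<dots> \<ge> 0"
    using sc by (intro mult_nonneg_nonneg kernel_on_nonneg avg_kernel_nonneg[OF mu]) auto
  finally show ?thesis
    unfolding Lg_def by simp
qed

section \<open>Induction over the coordinates\<close>

lemma sum_Pow_insert:
  assumes "finite J" "i \<notin> J"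
  shows "(\<Sum>S\<in>Pow (insert i J). F S) = (\<Sum>S\<in>Pow J. F S) + (\<Sum>S\<in>Pow J. F (insert i S))"
proof -
  have d: "Pow J \<inter> insert i ` Pow J = {}" using assms(2) by auto
  have inj: "inj_on (insert i) (Pow J)"
    using assms(2) unfolding inj_on_def by (metis PowD insert_ident subsetD)
  have "(\<Sum>S\<in>Pow (insert i J). F S) = (\<Sum>S\<in>Pow J \<union> insert i ` Pow J. F S)"
    by (simp add: Pow_insert)
  also have "\<dots> = (\<Sum>S\<in>Pow J. F S) + (\<Sum>S\<in>insert i ` Pow J. F S)"
    using assms(1) d by (intro sum.union_disjoint) auto
  also have "(\<Sum>S\<in>insert i ` Pow J. F S) = (\<Sum>S\<in>Pow J. F (insert i S))"
    using inj by (simp add: sum.reindex)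
  finally show ?thesis .
qed

lemma sum_weighted_noisy_derivs_le:
  assumes mu: "fin_prob \<mu>" and c0: "c \<ge> 0" and sc: "\<sigma>\<^sup>2 + c \<le> 1" and fin: "finite J"
  shows "(\<Sum>S\<in>Pow J. c ^ card S * avg_on \<mu> J (\<lambda>w. (noise_on \<mu> \<sigma> (J - S) (LS_op \<mu> S g) w)\<^sup>2) x)
    \<le> avg_on \<mu> J (\<lambda>w. (g w)\<^sup>2) x"
  using fin
proof (induction J arbitrary: g x rule: finite_induct)
  case empty
  then show ?case by simp
next
  case (insert i J0)
  define N where "N J h S = avg_on \<mu> J (\<lambda>w. (noise_on \<mu> \<sigma> (J - S) (LS_op \<mu> S h) w)\<^sup>2)" for J h S
  define G where "G = noise_at \<mu> \<sigma> i g"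
  define Lg where "Lg = L_op \<mu> i g"
  have IH: "(\<Sum>S\<in>Pow J0. c ^ card S * N J0 h S v) \<le> avg_on \<mu> J0 (\<lambda>w. (h w)\<^sup>2) v" for h v
    unfolding N_def by (rule insert(3))
  have N_out: "N (insert i J0) g S = avg_at \<mu> i (N J0 G S)" if "S \<in> Pow J0" for S
  proof -
    have S: "finite S" "i \<notin> S" and eq: "insert i J0 - S = insert i (J0 - S)"
      using that insert(1,2) finite_subset by auto
    have "noise_on \<mu> \<sigma> (insert i J0 - S) (LS_op \<mu> S g) w = noise_on \<mu> \<sigma> (J0 - S) (LS_op \<mu> S G) w" for w
      unfolding eq G_def using insert(1,2) S by (simp add: kernel_on_insert_inner LS_op_kernel_at)
    then show ?thesis
      unfolding N_def using insert(1,2) by (simp add: kernel_on_insert fun_eq_iff)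
  qed
  have N_in: "N (insert i J0) g (insert i S) = avg_at \<mu> i (N J0 Lg S)" if "S \<in> Pow J0" for S
  proof -
    have "finite S" "i \<notin> S" "insert i J0 - insert i S = J0 - S"
      using that insert(1,2) finite_subset by auto
    then show ?thesis
      unfolding N_def Lg_def using insert(1,2) by (simp add: kernel_on_insert LS_op_insert_inner fun_eq_iff)
  qed
  have card_in: "card (insert i S) = Suc (card S)" if "S \<in> Pow J0" for S
  proof -
    have "finite S" "i \<notin> S"
      using that insert(1,2) finite_subset by auto
    then show ?thesis by simp
  qed
  have "(\<Sum>S\<in>Pow (insert i J0). c ^ card S * N (insert i J0) g S x)
      = (\<Sum>S\<in>Pow J0. c ^ card S * avg_at \<mu> i (N J0 G S) x)
        + c * (\<Sum>S\<in>Pow J0. c ^ card S * avg_at \<mu> i (N J0 Lg S) x)"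
    using insert(1,2) by (simp add: sum_Pow_insert N_out N_in card_in sum_distrib_left ac_simps)
  also have "\<dots> = avg_at \<mu> i (\<lambda>v. \<Sum>S\<in>Pow J0. c ^ card S * N J0 G S v) x
      + c * avg_at \<mu> i (\<lambda>v. \<Sum>S\<in>Pow J0. c ^ card S * N J0 Lg S v) x"
    by (simp only: kernel_at_sum kernel_at_cmult)
  also have "\<dots> \<le> avg_at \<mu> i (avg_on \<mu> J0 (\<lambda>w. (G w)\<^sup>2)) x + c * avg_at \<mu> i (avg_on \<mu> J0 (\<lambda>w. (Lg w)\<^sup>2)) x"
    using avg_kernel_nonneg[OF mu] IH c0 by (intro add_mono mult_left_mono kernel_at_mono) auto
  also have "\<dots> = avg_on \<mu> (insert i J0) (\<lambda>w. (G w)\<^sup>2 + c * (Lg w)\<^sup>2) x"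
    using insert(1,2) by (simp add: kernel_on_add kernel_on_cmult kernel_on_insert)
  also have "\<dots> \<le> avg_on \<mu> (insert i J0) (\<lambda>w. (g w)\<^sup>2) x"
    unfolding G_def Lg_def using insert(1) sc by (intro kernel_on_noise_at_sq_le mu) auto
  finally show ?case
    unfolding N_def .
qed

text \<open>\<open>noisy_deriv_sq \<mu> \<sigma> J S g x\<close> is \<open>\<parallel>T\<^sub>\<sigma> D\<^sub>S\<^sub>,\<^sub>x g\<parallel>\<^sub>2\<^sup>2\<close>, the norm taken over the
  coordinates \<open>J - S\<close>.\<close>

definition noisy_deriv_sq :: "('a::finite \<Rightarrow> real) \<Rightarrow> real \<Rightarrow> nat set \<Rightarrow> nat set \<Rightarrow>
    ((nat \<Rightarrow> 'a) \<Rightarrow> real) \<Rightarrow> (nat \<Rightarrow> 'a) \<Rightarrow> real" where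
  "noisy_deriv_sq \<mu> \<sigma> J S g x = avg_on \<mu> (J - S) (\<lambda>w. (noise_on \<mu> \<sigma> (J - S) (LS_op \<mu> S g) w)\<^sup>2) x"

lemma kernel_on_noise_at:
  "kernel_on k R (noise_at \<mu> \<rho> i u) x = kernel_on k R (E_op \<mu> i u) x + \<rho> * kernel_on k R (L_op \<mu> i u) x"
proof -
  have "noise_at \<mu> \<rho> i u = (\<lambda>x. E_op \<mu> i u x + \<rho> * L_op \<mu> i u x)"
    by (intro ext) (rule kernel_at_noise)
  then show ?thesis
    by (simp add: kernel_on_add kernel_on_cmult)
qed

text \<open>Splitting \<open>L\<^sub>S g\<close> at the coordinate \<open>i\<close> into its \<open>E\<^sub>i\<close>- and \<open>L\<^sub>i\<close>-parts expresses the three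
  quantities of the inductive step through the squared norm \<open>s\<close> of the first part (which does not
  depend on \<open>x\<^sub>i\<close>), the squared norm \<open>t\<close> of the second, and their mean-zero correlation \<open>c\<close>.\<close>

lemma noisy_deriv_sq_decomposition:
  assumes mu: "fin_prob \<mu>" and fin: "finite J0" and iJ: "i \<notin> J0" and SJ: "S \<subseteq> J0"
  obtains s c t :: "(nat \<Rightarrow> 'a::finite) \<Rightarrow> real"
  where "\<And>v. s v \<ge> 0" "\<And>v. t v \<ge> 0" "\<And>v. (c v)\<^sup>2 \<le> s v * t v" "indep_coord i s"
    "\<And>w. avg_at \<mu> i c w = 0"
    "\<And>\<rho> v. noisy_deriv_sq \<mu> \<sigma> J0 S (noise_at \<mu> \<rho> i g) v = s v + 2 * \<rho> * c v + \<rho>\<^sup>2 * t v"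
    "\<And>w. noisy_deriv_sq \<mu> \<sigma> (insert i J0) S g w = s w + \<sigma>\<^sup>2 * avg_at \<mu> i t w"
    "\<And>v. noisy_deriv_sq \<mu> \<sigma> (insert i J0) (insert i S) g v = t v"
proof -
  note kpos = avg_kernel_nonneg[OF mu]
  have fS: "finite S" and iS: "i \<notin> S"
    using SJ fin iJ finite_subset by auto
  define R where "R = J0 - S"
  have fR: "finite R" and iR: "i \<notin> R"
    using fin iJ by (auto simp: R_def)
  define u where "u = LS_op \<mu> S g"
  define P where "P = noise_on \<mu> \<sigma> R (E_op \<mu> i u)"
  define Q where "Q = noise_on \<mu> \<sigma> R (L_op \<mu> i u)"
  define s where "s = avg_on \<mu> R (\<lambda>x. (P x)\<^sup>2)"
  define c where "c = avg_on \<mu> R (\<lambda>x. P x * Q x)"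
  define t where "t = avg_on \<mu> R (\<lambda>x. (Q x)\<^sup>2)"
  have indP: "indep_coord i P"
    unfolding P_def using iR by (intro indep_coord_kernel_on indep_coord_E_op)
  have inds: "indep_coord i s"
    unfolding s_def using iR by (intro indep_coord_kernel_on indep_coord_comp[OF indP])
  have s0: "s v \<ge> 0" and t0: "t v \<ge> 0" for v
    unfolding s_def t_def by (intro kernel_on_nonneg kpos; simp)+
  have CS: "(c v)\<^sup>2 \<le> s v * t v" for v
    unfolding c_def s_def t_def by (rule kernel_on_Cauchy_Schwarz[OF kpos])
  have EQ: "avg_at \<mu> i Q x = 0" for x
  proof -
    have "avg_at \<mu> i Q x = noise_on \<mu> \<sigma> R (avg_at \<mu> i (L_op \<mu> i u)) x"
      unfolding Q_def using fR iR by (simp add: kernel_on_kernel_at_commute)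
    also have "avg_at \<mu> i (L_op \<mu> i u) = (\<lambda>_. 0)"
      using E_op_L_op[OF mu] by (simp add: E_op_eq_kernel_at fun_eq_iff)
    finally show ?thesis
      by (simp add: kernel_on_zero)
  qed
  have Ec: "avg_at \<mu> i c w = 0" for w
  proof -
    have "avg_at \<mu> i c w = avg_on \<mu> R (avg_at \<mu> i (\<lambda>x. P x * Q x)) w"
      unfolding c_def using fR iR by (simp add: kernel_on_kernel_at_commute)
    also have "avg_at \<mu> i (\<lambda>x. P x * Q x) = (\<lambda>_. 0)"
      by (intro ext) (simp add: kernel_at_indep_mult[OF indP] EQ)
    finally show ?thesis
      by (simp add: kernel_on_zero)
  qed
  have N1: "noisy_deriv_sq \<mu> \<sigma> J0 S (noise_at \<mu> \<rho> i g) v = s v + 2 * \<rho> * c v + \<rho>\<^sup>2 * t v" for \<rho> v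
  proof -
    have "LS_op \<mu> S (noise_at \<mu> \<rho> i g) = noise_at \<mu> \<rho> i u"
      unfolding u_def using fS iS by (rule LS_op_kernel_at)
    then have "noisy_deriv_sq \<mu> \<sigma> J0 S (noise_at \<mu> \<rho> i g) v = avg_on \<mu> R (\<lambda>x. (P x + \<rho> * Q x)\<^sup>2) v"
      unfolding noisy_deriv_sq_def R_def[symmetric] P_def Q_def by (simp add: kernel_on_noise_at)
    then show ?thesis
      unfolding s_def c_def t_def by (simp add: kernel_on_square_expand)
  qed
  have N2: "noisy_deriv_sq \<mu> \<sigma> (insert i J0) S g w = s w + \<sigma>\<^sup>2 * avg_at \<mu> i t w" for w
  proof -
    have e: "insert i J0 - S = insert i R"
      using iS by (auto simp: R_def)
    have "noise_on \<mu> \<sigma> (insert i R) u x = P x + \<sigma> * Q x" for x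
      unfolding P_def Q_def using fR iR by (simp add: kernel_on_insert_inner kernel_on_noise_at)
    then have "noisy_deriv_sq \<mu> \<sigma> (insert i J0) S g w = avg_at \<mu> i (avg_on \<mu> R (\<lambda>x. (P x + \<sigma> * Q x)\<^sup>2)) w"
      unfolding noisy_deriv_sq_def e u_def[symmetric] using fR iR by (simp add: kernel_on_insert)
    also have "avg_on \<mu> R (\<lambda>x. (P x + \<sigma> * Q x)\<^sup>2) = (\<lambda>v. s v + (2 * \<sigma>) * c v + \<sigma>\<^sup>2 * t v)"
      unfolding s_def c_def t_def by (intro ext) (simp add: kernel_on_square_expand)
    also have "avg_at \<mu> i (\<lambda>v. s v + (2 * \<sigma>) * c v + \<sigma>\<^sup>2 * t v) w
        = avg_at \<mu> i s w + (2 * \<sigma>) * avg_at \<mu> i c w + \<sigma>\<^sup>2 * avg_at \<mu> i t w"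
      by (simp add: kernel_at_add kernel_at_cmult)
    also have "\<dots> = s w + \<sigma>\<^sup>2 * avg_at \<mu> i t w"
      using avg_at_indep_coord[OF mu inds] Ec by simp
    finally show ?thesis .
  qed
  have N3: "noisy_deriv_sq \<mu> \<sigma> (insert i J0) (insert i S) g v = t v" for v
  proof -
    have "insert i J0 - insert i S = R"
      using iJ by (auto simp: R_def)
    moreover have "LS_op \<mu> (insert i S) g = L_op \<mu> i u"
      unfolding u_def using fS iS by (rule LS_op_insert)
    ultimately show ?thesis
      unfolding noisy_deriv_sq_def t_def Q_def by simp
  qed
  show thesis
    using that[OF s0 t0 CS inds Ec N1 N2 N3] .
qed

lemma one_coord_step:
  assumes mu: "fin_prob \<mu>" and H: "one_coord_bound \<mu> p \<rho> \<sigma> \<beta>"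
    and fin: "finite J0" and iJ: "i \<notin> J0" and SJ: "S \<subseteq> J0"
  shows "avg_at \<mu> i (\<lambda>v. noisy_deriv_sq \<mu> \<sigma> J0 S (noise_at \<mu> \<rho> i g) v powr p) w
    \<le> noisy_deriv_sq \<mu> \<sigma> (insert i J0) S g w powr p
      + \<beta> * avg_at \<mu> i (\<lambda>v. noisy_deriv_sq \<mu> \<sigma> (insert i J0) (insert i S) g v powr p) w"
proof -
  obtain s c t where s0: "\<And>v. s v \<ge> 0" and t0: "\<And>v. t v \<ge> 0" and CS: "\<And>v. (c v)\<^sup>2 \<le> s v * t v"
    and inds: "indep_coord i s" and Ec: "\<And>w. avg_at \<mu> i c w = 0"
    and N1: "\<And>\<rho> v. noisy_deriv_sq \<mu> \<sigma> J0 S (noise_at \<mu> \<rho> i g) v = s v + 2 * \<rho> * c v + \<rho>\<^sup>2 * t v"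
    and N2: "\<And>w. noisy_deriv_sq \<mu> \<sigma> (insert i J0) S g w = s w + \<sigma>\<^sup>2 * avg_at \<mu> i t w"
    and N3: "\<And>v. noisy_deriv_sq \<mu> \<sigma> (insert i J0) (insert i S) g v = t v"
    using noisy_deriv_sq_decomposition[OF mu fin iJ SJ] by metis
  have sz: "s (w(i := z)) = s w" for z
    using inds unfolding indep_coord_def by simp
  have "avg_at \<mu> i (\<lambda>v. noisy_deriv_sq \<mu> \<sigma> J0 S (noise_at \<mu> \<rho> i g) v powr p) w
      = (\<Sum>z\<in>UNIV. \<mu> z * (s w + 2 * \<rho> * c (w(i:=z)) + \<rho>\<^sup>2 * t (w(i:=z))) powr p)"
    by (simp add: kernel_at_def avg_kernel_def N1 sz)
  also have "\<dots> \<le> (s w + \<sigma>\<^sup>2 * (\<Sum>z\<in>UNIV. \<mu> z * t (w(i:=z)))) powr p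
      + \<beta> * (\<Sum>z\<in>UNIV. \<mu> z * t (w(i:=z)) powr p)"
  proof -
    have "(\<Sum>z\<in>UNIV. \<mu> z * c (w(i:=z))) = 0"
      using Ec by (simp add: kernel_at_def avg_kernel_def)
    moreover have "(c (w(i:=z)))\<^sup>2 \<le> s w * t (w(i:=z))" for z
      using CS[of "w(i:=z)"] sz by simp
    ultimately show ?thesis
      using H[unfolded one_coord_bound_def, rule_format, of "s w" "\<lambda>z. t (w(i:=z))" "\<lambda>z. c (w(i:=z))"]
        s0 t0
      by simp
  qed
  also have "\<dots> = noisy_deriv_sq \<mu> \<sigma> (insert i J0) S g w powr p
      + \<beta> * avg_at \<mu> i (\<lambda>v. noisy_deriv_sq \<mu> \<sigma> (insert i J0) (insert i S) g v powr p) w"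
    by (simp add: N2 N3 kernel_at_def avg_kernel_def)
  finally show ?thesis .
qed

text \<open>Peeling off the coordinates one at a time, each step either keeps the current set \<open>S\<close> of
  differentiated coordinates or adds the new coordinate to it at the price of a factor \<open>\<beta>\<close>.\<close>

lemma noisy_moment_le_deriv_sum:
  assumes mu: "fin_prob \<mu>" and H: "one_coord_bound \<mu> p \<rho> \<sigma> \<beta>" and b0: "\<beta> \<ge> 0"
    and fin: "finite J"
  shows "avg_on \<mu> J (\<lambda>w. ((noise_on \<mu> \<rho> J g w)\<^sup>2) powr p) x
    \<le> (\<Sum>S\<in>Pow J. \<beta> ^ card S * avg_on \<mu> S (\<lambda>w. noisy_deriv_sq \<mu> \<sigma> J S g w powr p) x)"
  using fin
proof (induction J arbitrary: g x rule: finite_induct)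
  case empty
  then show ?case by (simp add: noisy_deriv_sq_def)
next
  case (insert i J0)
  note kpos = avg_kernel_nonneg[OF mu]
  define M where "M J h S = (\<lambda>w. noisy_deriv_sq \<mu> \<sigma> J S h w powr p)" for J h S
  define h where "h = noise_at \<mu> \<rho> i g"
  define J where "J = insert i J0"
  have S_fin: "finite S" "i \<notin> S" if "S \<in> Pow J0" for S
    using that insert(1,2) finite_subset by auto
  have "noise_on \<mu> \<rho> J g w = noise_on \<mu> \<rho> J0 h w" for w
    unfolding J_def h_def using insert(1,2) by (rule kernel_on_insert_inner)
  then have "avg_on \<mu> J (\<lambda>w. ((noise_on \<mu> \<rho> J g w)\<^sup>2) powr p) x
      = avg_at \<mu> i (avg_on \<mu> J0 (\<lambda>w. ((noise_on \<mu> \<rho> J0 h w)\<^sup>2) powr p)) x"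
    unfolding J_def using insert(1,2) by (simp add: kernel_on_insert)
  also have "\<dots> \<le> avg_at \<mu> i (\<lambda>v. \<Sum>S\<in>Pow J0. \<beta> ^ card S * avg_on \<mu> S (M J0 h S) v) x"
    unfolding M_def by (rule kernel_at_mono[OF kpos insert(3)])
  also have "\<dots> = (\<Sum>S\<in>Pow J0. \<beta> ^ card S * avg_on \<mu> S (avg_at \<mu> i (M J0 h S)) x)"
    using S_fin by (simp add: kernel_at_sum kernel_at_cmult kernel_on_kernel_at_commute)
  also have "\<dots> \<le> (\<Sum>S\<in>Pow J0. \<beta> ^ card S
      * avg_on \<mu> S (\<lambda>w. M J g S w + \<beta> * avg_at \<mu> i (M J g (insert i S)) w) x)"
    unfolding J_def h_def M_def
    by (intro sum_mono mult_left_mono kernel_on_mono kpos one_coord_step[OF mu H insert(1,2)]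
        zero_le_power b0) auto
  also have "\<dots> = (\<Sum>S\<in>Pow J0. \<beta> ^ card S * avg_on \<mu> S (M J g S) x)
      + (\<Sum>S\<in>Pow J0. \<beta> ^ card (insert i S) * avg_on \<mu> (insert i S) (M J g (insert i S)) x)"
    using S_fin by (simp add: sum.distrib kernel_on_add kernel_on_cmult kernel_on_insert_inner distrib_left ac_simps)
  also have "\<dots> = (\<Sum>S\<in>Pow J. \<beta> ^ card S * avg_on \<mu> S (M J g S) x)"
    unfolding J_def using insert(1,2) by (rule sum_Pow_insert[symmetric])
  finally show ?case
    unfolding J_def M_def .
qed

lemma noise_contraction:
  assumes mu: "fin_prob \<mu>" and s1: "\<sigma>\<^sup>2 \<le> 1" and fin: "finite R"
  shows "avg_on \<mu> R (\<lambda>w. (noise_on \<mu> \<sigma> R g w)\<^sup>2) x \<le> avg_on \<mu> R (\<lambda>w. (g w)\<^sup>2) x"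
proof -
  have "(\<Sum>S\<in>Pow R. 0 ^ card S * avg_on \<mu> R (\<lambda>w. (noise_on \<mu> \<sigma> (R - S) (LS_op \<mu> S g) w)\<^sup>2) x)
      = (\<Sum>S\<in>Pow R. if S = {} then avg_on \<mu> R (\<lambda>w. (noise_on \<mu> \<sigma> R g w)\<^sup>2) x else 0)"
    using fin by (intro sum.cong refl) (auto dest: finite_subset)
  also have "\<dots> = avg_on \<mu> R (\<lambda>w. (noise_on \<mu> \<sigma> R g w)\<^sup>2) x"
    using fin by (subst sum.delta) auto
  finally show ?thesis
    using sum_weighted_noisy_derivs_le[OF mu _ _ fin, of 0 \<sigma> g x] s1 by simp
qed

lemma override_on_PiE:
  "y \<in> PiE I (\<lambda>_. UNIV) \<Longrightarrow> (\<forall>j. j \<notin> I \<longrightarrow> x j = undefined) \<Longrightarrow> override_on x y I = y"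
  by (auto simp: override_on_def fun_eq_iff PiE_def extensional_def)

lemma expect_on_eq_kernel_on: "expect_on \<mu> I g = avg_on \<mu> I g (\<lambda>_. undefined)"
  unfolding expect_on_def kernel_on_def avg_kernel_def by (intro sum.cong refl) (simp add: override_on_PiE)

lemma expect_nonneg: "fin_prob \<mu> \<Longrightarrow> (\<And>y. g y \<ge> 0) \<Longrightarrow> expect_on \<mu> I g \<ge> 0"
  unfolding expect_on_eq_kernel_on by (intro kernel_on_nonneg avg_kernel_nonneg) auto

lemma expect_kernel_mono_on:
  assumes "fin_prob \<mu>" "\<And>x. x \<in> PiE S (\<lambda>_. UNIV) \<Longrightarrow> F x \<le> G x"
  shows "avg_on \<mu> S F (\<lambda>_. undefined) \<le> avg_on \<mu> S G (\<lambda>_. undefined)"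
  unfolding kernel_on_def
proof (rule sum_mono)
  fix y :: "nat \<Rightarrow> 'a"
  assume y: "y \<in> PiE S (\<lambda>_. UNIV)"
  have "F (override_on (\<lambda>_. undefined) y S) \<le> G (override_on (\<lambda>_. undefined) y S)"
    using assms(2) y by (simp add: override_on_PiE)
  moreover have "(\<Prod>i\<in>S. avg_kernel \<mu> undefined (y i)) \<ge> 0"
    using avg_kernel_nonneg[OF assms(1)] by (intro prod_nonneg) auto
  ultimately show "(\<Prod>i\<in>S. avg_kernel \<mu> ((\<lambda>_. undefined) i) (y i)) * F (override_on (\<lambda>_. undefined) y S)
    \<le> (\<Prod>i\<in>S. avg_kernel \<mu> ((\<lambda>_. undefined) i) (y i)) * G (override_on (\<lambda>_. undefined) y S)"
    by (simp add: mult_left_mono)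
qed

lemma expect_kernel_cong_on:
  assumes "fin_prob \<mu>" "\<And>x. x \<in> PiE S (\<lambda>_. UNIV) \<Longrightarrow> F x = G x"
  shows "avg_on \<mu> S F (\<lambda>_. undefined) = avg_on \<mu> S G (\<lambda>_. undefined)"
  using expect_kernel_mono_on[OF assms(1), of S F G] expect_kernel_mono_on[OF assms(1), of S G F] assms(2)
  by force

lemma T_op_eq_kernel_on:
  assumes "x \<in> PiE {..<n} (\<lambda>_. UNIV)"
  shows "T_op \<mu> n \<rho> f x = noise_on \<mu> \<rho> {..<n} f x"
  unfolding T_op_def kernel_on_def noise_kernel_def
proof (intro sum.cong refl)
  fix y :: "nat \<Rightarrow> 'a"
  assume "y \<in> PiE {..<n} (\<lambda>_. UNIV)"
  moreover have "\<forall>j. j \<notin> {..<n} \<longrightarrow> x j = undefined"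
    using assms by (auto simp: PiE_def extensional_def)
  ultimately show "(\<Prod>i<n. \<rho> * (if y i = x i then 1 else 0) + (1 - \<rho>) * \<mu> (y i)) * f y
    = (\<Prod>i<n. \<rho> * (if y i = x i then 1 else 0) + (1 - \<rho>) * \<mu> (y i)) * f (override_on x y {..<n})"
    by (simp add: override_on_PiE)
qed

lemma kernel_on_LS_eq_D_op:
  assumes "S \<subseteq> J" "x \<in> PiE S (\<lambda>_. UNIV)"
  shows "avg_on \<mu> (J - S) (\<lambda>w. (LS_op \<mu> S f w)\<^sup>2) x = expect_on \<mu> (J - S) (\<lambda>y. (D_op \<mu> S x f y)\<^sup>2)"
  unfolding kernel_on_def expect_on_def D_op_def avg_kernel_def
proof (intro sum.cong refl)
  fix y :: "nat \<Rightarrow> 'a"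
  assume y: "y \<in> PiE (J - S) (\<lambda>_. UNIV)"
  have "override_on x y (J - S) = (\<lambda>i. if i \<in> S then x i else y i)"
    using assms y by (auto simp: override_on_def fun_eq_iff PiE_def extensional_def)
  then show "(\<Prod>i\<in>J - S. \<mu> (y i)) * (LS_op \<mu> S f (override_on x y (J - S)))\<^sup>2
    = (\<Prod>i\<in>J - S. \<mu> (y i)) * (LS_op \<mu> S f (\<lambda>i. if i \<in> S then x i else y i))\<^sup>2"
    by simp
qed

lemma kernel_on_noisy_deriv_sq:
  assumes "finite J" "S \<subseteq> J"
  shows "avg_on \<mu> S (noisy_deriv_sq \<mu> \<sigma> J S f) x
    = avg_on \<mu> J (\<lambda>w. (noise_on \<mu> \<sigma> (J - S) (LS_op \<mu> S f) w)\<^sup>2) x"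
proof -
  have "J = S \<union> (J - S)" "finite S"
    using assms finite_subset by auto
  then show ?thesis
    unfolding noisy_deriv_sq_def using assms by (metis Diff_disjoint kernel_on_union finite_Diff)
qed

lemma noisy_deriv_sq_le_global:
  fixes \<mu> :: "'a::finite \<Rightarrow> real"
  assumes mu: "fin_prob \<mu>" and s1: "\<sigma>\<^sup>2 \<le> 1" and glob: "L2_global \<mu> n r \<gamma> f"
    and S: "S \<subseteq> {..<n}" and x: "x \<in> PiE S (\<lambda>_. UNIV)"
  shows "noisy_deriv_sq \<mu> \<sigma> {..<n} S f x \<le> (r ^ card S * \<gamma>)\<^sup>2"
proof -
  have norm0: "0 \<le> norm2_on \<mu> ({..<n} - S) (D_op \<mu> S x f)"
    by (simp add: norm2_on_def expect_nonneg[OF mu])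
  have "noisy_deriv_sq \<mu> \<sigma> {..<n} S f x \<le> avg_on \<mu> ({..<n} - S) (\<lambda>w. (LS_op \<mu> S f w)\<^sup>2) x"
    unfolding noisy_deriv_sq_def by (intro noise_contraction mu s1) auto
  also have "\<dots> = (norm2_on \<mu> ({..<n} - S) (D_op \<mu> S x f))\<^sup>2"
    using S x by (simp add: kernel_on_LS_eq_D_op norm2_on_def expect_nonneg[OF mu])
  also have "\<dots> \<le> (r ^ card S * \<gamma>)\<^sup>2"
    using glob S x norm0 unfolding L2_global_def by (intro power_mono) auto
  finally show ?thesis .
qed

text \<open>Globality bounds each \<open>\<parallel>T\<^sub>\<sigma> D\<^sub>S\<^sub>,\<^sub>x f\<parallel>\<^sub>2\<^sup>2\<close> by \<open>(r\<^bsup>|S|\<^esup>\<gamma>)\<^sup>2\<close>, which lowers the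
  power \<open>q/2\<close> to \<open>1\<close> at the cost of the factor \<open>(r\<^bsup>|S|\<^esup>\<gamma>)\<^bsup>q-2\<^esup>\<close>.\<close>

lemma noisy_deriv_sq_powr_le:
  fixes \<mu> :: "'a::finite \<Rightarrow> real"
  assumes mu: "fin_prob \<mu>" and r0: "r > 0" and g0: "\<gamma> > 0" and q2: "q \<ge> 2" and s1: "\<sigma>\<^sup>2 \<le> 1"
    and glob: "L2_global \<mu> n r \<gamma> f" and S: "S \<subseteq> {..<n}"
  shows "avg_on \<mu> S (\<lambda>w. noisy_deriv_sq \<mu> \<sigma> {..<n} S f w powr (q/2)) (\<lambda>_. undefined)
    \<le> (r powr (q - 2)) ^ card S * \<gamma> powr (q - 2) * avg_on \<mu> S (noisy_deriv_sq \<mu> \<sigma> {..<n} S f) (\<lambda>_. undefined)"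
proof -
  define K where "K = (r powr (q - 2)) ^ card S * \<gamma> powr (q - 2)"
  have "avg_on \<mu> S (\<lambda>w. noisy_deriv_sq \<mu> \<sigma> {..<n} S f w powr (q/2)) (\<lambda>_. undefined)
      \<le> avg_on \<mu> S (\<lambda>w. K * noisy_deriv_sq \<mu> \<sigma> {..<n} S f w) (\<lambda>_. undefined)"
  proof (rule expect_kernel_mono_on[OF mu])
    fix x :: "nat \<Rightarrow> 'a"
    assume x: "x \<in> PiE S (\<lambda>_. UNIV)"
    have "noisy_deriv_sq \<mu> \<sigma> {..<n} S f x \<ge> 0"
      unfolding noisy_deriv_sq_def by (intro kernel_on_nonneg avg_kernel_nonneg[OF mu]) auto
    then have "noisy_deriv_sq \<mu> \<sigma> {..<n} S f x powr (q/2)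
        \<le> noisy_deriv_sq \<mu> \<sigma> {..<n} S f x * ((r ^ card S * \<gamma>)\<^sup>2) powr (q/2 - 1)"
      using noisy_deriv_sq_le_global[OF mu s1 glob S x] q2 by (intro powr_le_mult_powr) auto
    also have "\<dots> = K * noisy_deriv_sq \<mu> \<sigma> {..<n} S f x"
      unfolding K_def using powr_global_bound[OF r0 g0] by simp
    finally show "noisy_deriv_sq \<mu> \<sigma> {..<n} S f x powr (q/2) \<le> K * noisy_deriv_sq \<mu> \<sigma> {..<n} S f x" .
  qed
  then show ?thesis
    unfolding K_def by (simp only: kernel_on_cmult)
qed

lemma hypercontractivity_from_one_coord_bound:
  fixes \<mu> :: "'a::finite \<Rightarrow> real" and f :: "(nat \<Rightarrow> 'a) \<Rightarrow> real"
  assumes mu: "fin_prob \<mu>" and r0: "r > 0" and g0: "\<gamma> > 0" and q2: "q \<ge> 2"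
    and glob: "L2_global \<mu> n r \<gamma> f" and H: "one_coord_bound \<mu> (q/2) \<rho> \<sigma> \<beta>" and b0: "\<beta> \<ge> 0"
    and sb: "\<sigma>\<^sup>2 + \<beta> * r powr (q - 2) \<le> 1"
  shows "normq_pow \<mu> n q (T_op \<mu> n \<rho> f) \<le> (norm2_on \<mu> {..<n} f)\<^sup>2 * \<gamma> powr (q - 2)"
proof -
  define J where "J = {..<n}"
  define b where "b = (\<lambda>_::nat. undefined :: 'a)"
  define c where "c = \<beta> * r powr (q - 2)"
  have c0: "c \<ge> 0"
    unfolding c_def using b0 by simp
  then have s1: "\<sigma>\<^sup>2 \<le> 1"
    using sb unfolding c_def by linarith
  have finJ: "finite J"
    unfolding J_def by simp
  have "normq_pow \<mu> n q (T_op \<mu> n \<rho> f) = avg_on \<mu> J (\<lambda>w. ((noise_on \<mu> \<rho> J f w)\<^sup>2) powr (q/2)) b"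
    unfolding normq_pow_def expect_on_eq_kernel_on b_def J_def
    by (intro expect_kernel_cong_on mu) (simp add: T_op_eq_kernel_on sq_powr)
  also have "\<dots> \<le> (\<Sum>S\<in>Pow J. \<beta> ^ card S * avg_on \<mu> S (\<lambda>w. noisy_deriv_sq \<mu> \<sigma> J S f w powr (q/2)) b)"
    by (rule noisy_moment_le_deriv_sum[OF mu H b0 finJ])
  also have "\<dots> \<le> (\<Sum>S\<in>Pow J. \<beta> ^ card S
      * ((r powr (q - 2)) ^ card S * \<gamma> powr (q - 2) * avg_on \<mu> S (noisy_deriv_sq \<mu> \<sigma> J S f) b))"
    unfolding J_def b_def
    by (intro sum_mono mult_left_mono zero_le_power b0 noisy_deriv_sq_powr_le[OF mu r0 g0 q2 s1 glob]) auto
  also have "\<dots> = \<gamma> powr (q - 2)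
      * (\<Sum>S\<in>Pow J. c ^ card S * avg_on \<mu> J (\<lambda>w. (noise_on \<mu> \<sigma> (J - S) (LS_op \<mu> S f) w)\<^sup>2) b)"
    using finJ unfolding c_def
    by (simp add: kernel_on_noisy_deriv_sq sum_distrib_left power_mult_distrib ac_simps)
  also have "\<dots> \<le> \<gamma> powr (q - 2) * avg_on \<mu> J (\<lambda>w. (f w)\<^sup>2) b"
    by (intro mult_left_mono sum_weighted_noisy_derivs_le[OF mu c0 _ finJ]) (use sb c_def in auto)
  also have "avg_on \<mu> J (\<lambda>w. (f w)\<^sup>2) b = (norm2_on \<mu> {..<n} f)\<^sup>2"
    unfolding norm2_on_def J_def b_def expect_on_eq_kernel_on[symmetric] by (simp add: expect_nonneg[OF mu])
  finally show ?thesis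
    by (simp add: mult.commute)
qed

lemma hypercontractivity_from_budget:
  fixes \<mu> :: "'a::finite \<Rightarrow> real" and f :: "(nat \<Rightarrow> 'a) \<Rightarrow> real"
  assumes mu: "fin_prob \<mu>" and r0: "r > 0" and g0: "\<gamma> > 0" and q2: "q \<ge> 2"
    and glob: "L2_global \<mu> n r \<gamma> f" and rho0: "\<rho> \<ge> 0" and w0: "w0 > 0"
    and budget: "noise_budget (q/2) w0 \<rho> r \<le> 1"
  shows "normq_pow \<mu> n q (T_op \<mu> n \<rho> f) \<le> (norm2_on \<mu> {..<n} f)\<^sup>2 * \<gamma> powr (q - 2)"
proof -
  define p where "p = q/2"
  define \<sigma> where "\<sigma> = sqrt ((1 + quad_coeff p w0 / p) * \<rho>\<^sup>2)"
  define \<beta> where "\<beta> = tail_coeff p w0 * (\<rho>\<^sup>2) powr p"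
  have p1: "p \<ge> 1"
    using q2 by (simp add: p_def)
  have sig2: "\<sigma>\<^sup>2 = (1 + quad_coeff p w0 / p) * \<rho>\<^sup>2"
    unfolding \<sigma>_def using p1 quad_coeff_nonneg[OF p1] by simp
  then have "(p + quad_coeff p w0) * \<rho>\<^sup>2 \<le> p * \<sigma>\<^sup>2"
    using p1 by (simp add: field_simps)
  then have H: "one_coord_bound \<mu> p \<rho> \<sigma> \<beta>"
    unfolding \<beta>_def by (rule one_coord_bound_holds[OF mu p1 w0 rho0])
  have b0: "\<beta> \<ge> 0"
    unfolding \<beta>_def using tail_coeff_ge_1[OF p1 w0] by simp
  have "\<sigma>\<^sup>2 + \<beta> * r powr (q - 2) = noise_budget p w0 \<rho> r"
    unfolding noise_budget_def sig2 \<beta>_def p_def by simp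
  then show ?thesis
    using hypercontractivity_from_one_coord_bound[OF mu r0 g0 q2 glob H[unfolded p_def] b0] budget
    by (simp add: p_def)
qed

theorem mainTheorem10:
  fixes \<mu> :: "'a::finite \<Rightarrow> real" and n :: nat and r \<gamma> q \<rho> :: real
    and f :: "(nat \<Rightarrow> 'a) \<Rightarrow> real"
  assumes "fin_prob \<mu>"
    and "r > 0" and "\<gamma> > 0" and "q \<ge> 2"
    and "L2_global \<mu> n r \<gamma> f"
    and "(0 < \<rho> \<and> \<rho> \<le> 1 / (3 * sqrt 2) * min (1 / (r powr ((q - 2) / q) * q)) (1 / sqrt q))
         \<or> (r \<ge> 1 \<and> 0 < \<rho> \<and> \<rho> \<le> ln q / (16 * r * q))"
  shows "normq_pow \<mu> n q (T_op \<mu> n \<rho> f) \<le> (norm2_on \<mu> {..<n} f)\<^sup>2 * \<gamma> powr (q - 2)"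
  using assms(6)
proof
  assume "0 < \<rho> \<and> \<rho> \<le> 1 / (3 * sqrt 2) * min (1 / (r powr ((q - 2) / q) * q)) (1 / sqrt q)"
  then show ?thesis
    using noise_budget_case1[OF assms(4,2)] assms(4)
    by (intro hypercontractivity_from_budget[OF assms(1-5), of _ "1 / (2 * q)"]) auto
next
  assume "r \<ge> 1 \<and> 0 < \<rho> \<and> \<rho> \<le> ln q / (16 * r * q)"
  then show ?thesis
    using noise_budget_case2[OF assms(4)] assms(4)
    by (intro hypercontractivity_from_budget[OF assms(1-5), of _ "ln q / (4 * q)"]) auto
qed

end
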